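(* Let $d\ge2$ and $\Lambda>1$. For any $a\in C(\mathbb{T}^d;[1,\Lambda])$ and any $\delta>0$ there exist $a_\delta\in C^1(\mathbb{T}^d;[1,\Lambda])$ with $\|a-a_\delta\|_{C(\mathbb{T}^d)}\le\delta$ and a nonempty bounded open set $\Omega\subset\mathbb{R}^d$ with $C^2$ boundary such that $\mathbf{1}_{\overline\Omega}$ is a strict stationary subsolution of $-a_\delta(x)\kappa-\nabla a_\delta(x)\cdot n=0$, i.e. $-a_\delta(\xi)\kappa_{\partial\Omega}(\xi)-\nabla a_\delta(\xi)\cdot n_{\partial\Omega}(\xi)>0$ for all $\xi\in\partial\Omega$. If in addition $a\in C^2(\mathbb{T}^d;[1,\Lambda])$ and $p\in[1,\infty)$, then $a_\delta$ can moreover be chosen so that $\|a-a_\delta\|_{W^{1,p}(\mathbb{T}^d)}\le\delta$.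
   Context: Coefficients are $\mathbb{Z}^d$-periodic functions on $\mathbb{R}^d$. $n_{\partial\Omega}$ is the outward unit normal, $\kappa_{\partial\Omega}$ the mean curvature with convex sets having $\kappa\ge0$. *)

theory Defs
  imports "HOL-Analysis.Analysis"
begin

text \<open>Euclidean space R^d is real^'n with d = CARD('n).
  The torus T^d is modelled by Z^d-periodic functions on R^d.\<close>

definition int_vector :: "real^'n \<Rightarrow> bool" where
  "int_vector z \<longleftrightarrow> (\<forall>i. z $ i \<in> \<int>)"

definition periodic :: "(real^'n \<Rightarrow> real) \<Rightarrow> bool" where
  "periodic f \<longleftrightarrow> (\<forall>x z. int_vector z \<longrightarrow> f (x + z) = f x)"

text \<open>Gradient of a real-valued function at a point (meaningful where f is differentiable).\<close>
definition grad :: "(real^'n \<Rightarrow> real) \<Rightarrow> real^'n \<Rightarrow> real^'n" where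
  "grad f x = (SOME g. (f has_derivative (\<lambda>h. g \<bullet> h)) (at x))"

definition C1_fun :: "(real^'n \<Rightarrow> real) \<Rightarrow> bool" where
  "C1_fun f \<longleftrightarrow> (\<exists>g. (\<forall>x. (f has_derivative (\<lambda>h. g x \<bullet> h)) (at x)) \<and> continuous_on UNIV g)"

definition C2_fun :: "(real^'n \<Rightarrow> real) \<Rightarrow> bool" where
  "C2_fun f \<longleftrightarrow> (\<exists>g H. (\<forall>x. (f has_derivative (\<lambda>h. g x \<bullet> h)) (at x)) \<and>
      (\<forall>x. (g has_derivative (\<lambda>h. H x *v h)) (at x)) \<and> continuous_on UNIV H)"

definition C0_torus :: "real \<Rightarrow> (real^'n \<Rightarrow> real) \<Rightarrow> bool" where
  "C0_torus \<Lambda> f \<longleftrightarrow> continuous_on UNIV f \<and> periodic f \<and> (\<forall>x. 1 \<le> f x \<and> f x \<le> \<Lambda>)"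

definition C1_torus :: "real \<Rightarrow> (real^'n \<Rightarrow> real) \<Rightarrow> bool" where
  "C1_torus \<Lambda> f \<longleftrightarrow> C1_fun f \<and> periodic f \<and> (\<forall>x. 1 \<le> f x \<and> f x \<le> \<Lambda>)"

definition C2_torus :: "real \<Rightarrow> (real^'n \<Rightarrow> real) \<Rightarrow> bool" where
  "C2_torus \<Lambda> f \<longleftrightarrow> C2_fun f \<and> periodic f \<and> (\<forall>x. 1 \<le> f x \<and> f x \<le> \<Lambda>)"

definition sup_dist :: "(real^'n \<Rightarrow> real) \<Rightarrow> (real^'n \<Rightarrow> real) \<Rightarrow> real" where
  "sup_dist f g = (SUP x. \<bar>f x - g x\<bar>)"

definition W1p_norm :: "real \<Rightarrow> (real^'n \<Rightarrow> real) \<Rightarrow> real" where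
  "W1p_norm p f = (integral (cbox 0 1) (\<lambda>x. \<bar>f x\<bar> powr p + norm (grad f x) powr p)) powr (1 / p)"

text \<open>C^2 defining function of an open set: Omega = {phi < 0}, phi is C^2 on R^d and
  grad phi does not vanish on {phi = 0} (= boundary of Omega).  Omega has C^2 boundary iff
  such a function exists.\<close>
definition C2_defining :: "(real^'n \<Rightarrow> real) \<Rightarrow> (real^'n) set \<Rightarrow> bool" where
  "C2_defining \<phi> \<Omega> \<longleftrightarrow> C2_fun \<phi> \<and> \<Omega> = {x. \<phi> x < 0} \<and> (\<forall>x. \<phi> x = 0 \<longrightarrow> grad \<phi> x \<noteq> 0)"

definition C2_boundary :: "(real^'n) set \<Rightarrow> bool" where
  "C2_boundary \<Omega> \<longleftrightarrow> (\<exists>\<phi>. C2_defining \<phi> \<Omega>)"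

text \<open>Outward unit normal and mean curvature (sum of principal curvatures, = div n, so that
  convex sets have kappa >= 0); both are independent of the chosen defining function.\<close>
definition outward_normal :: "(real^'n) set \<Rightarrow> real^'n \<Rightarrow> real^'n" where
  "outward_normal \<Omega> x = (let \<phi> = (SOME \<phi>. C2_defining \<phi> \<Omega>) in grad \<phi> x /\<^sub>R norm (grad \<phi> x))"

definition divergence :: "(real^'n \<Rightarrow> real^'n) \<Rightarrow> real^'n \<Rightarrow> real" where
  "divergence F x = (\<Sum>i\<in>UNIV. frechet_derivative F (at x) (axis i 1) $ i)"

definition mean_curvature :: "(real^'n) set \<Rightarrow> real^'n \<Rightarrow> real" where
  "mean_curvature \<Omega> x = (let \<phi> = (SOME \<phi>. C2_defining \<phi> \<Omega>) in
      divergence (\<lambda>y. grad \<phi> y /\<^sub>R norm (grad \<phi> y)) x)"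

definition strict_stat_subsol :: "(real^'n \<Rightarrow> real) \<Rightarrow> (real^'n) set \<Rightarrow> bool" where
  "strict_stat_subsol a \<Omega> \<longleftrightarrow> (\<forall>\<xi>\<in>frontier \<Omega>.
      - a \<xi> * mean_curvature \<Omega> \<xi> - grad a \<xi> \<bullet> outward_normal \<Omega> \<xi> > 0)"

end

theory Submission
  imports Defs
begin

text \<open>
  A continuous coefficient is first approximated by a periodic \<open>C\<^sup>1\<close> one (Stone--Weierstrass
  on the torus) and its values are then contracted towards the midpoint of \<open>[1, \<Lambda>]\<close>; a
  \<open>C\<^sup>1\<close> coefficient is contracted directly. The room gained is used to add a small periodic
  bump: in every unit cell it is a radial \<open>C\<^sup>1\<close> step of height \<open>m w\<close> that drops across a
  shell of width of order \<open>w\<close> around the sphere of radius \<open>1/4\<close> about the centre of the cell,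
  with radial slope \<open>-m\<close> on that sphere. For \<open>\<Omega>\<close> the ball bounded by the sphere,
  \<open>\<kappa> = 4 (d - 1) \<ge> 0\<close> and the bump contributes \<open>-m/2\<close> to \<open>\<nabla>a \<cdot> n\<close>, so
  \<open>-a \<kappa> - \<nabla>a \<cdot> n > 0\<close> as soon as \<open>m\<close> is large compared with \<open>\<Lambda> (d - 1)\<close> and the gradient
  of the contracted coefficient. The bump changes \<open>a\<close> by at most \<open>m w\<close>; its gradient is bounded
  by \<open>m\<close> and supported in a shell of volume \<open>O(w)\<close>, so choosing \<open>w\<close> small after \<open>m\<close> keeps
  both the uniform and the \<open>W\<^sup>1\<^sup>,\<^sup>p\<close> errors small.
\<close>

section \<open>Gradients and continuously differentiable functions\<close>

lemma grad_eqI: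
  assumes "(f has_derivative (\<lambda>h. G \<bullet> h)) (at x)"
  shows "grad f x = G"
proof -
  have "(f has_derivative (\<lambda>h. grad f x \<bullet> h)) (at x)"
    unfolding grad_def by (rule someI[where P = "\<lambda>g. (f has_derivative (\<lambda>h. g \<bullet> h)) (at x)", OF assms])
  then have "(\<lambda>h. grad f x \<bullet> h) = (\<lambda>h. G \<bullet> h)"
    by (rule has_derivative_unique[OF _ assms])
  then have "(grad f x - G) \<bullet> (grad f x - G) = 0"
    by (simp add: inner_diff_left fun_eq_iff)
  then show ?thesis
    by simp
qed

lemma C2_fun_D:
  assumes "C2_fun f"
  shows C2_fun_has_derivative: "(f has_derivative (\<lambda>h. grad f x \<bullet> h)) (at x)"
    and C2_fun_grad_differentiable: "grad f differentiable (at x)"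
proof -
  obtain g H where f': "\<And>x. (f has_derivative (\<lambda>h. g x \<bullet> h)) (at x)"
    and g': "\<And>x. (g has_derivative (\<lambda>h. H x *v h)) (at x)"
    using assms unfolding C2_fun_def by blast
  have "grad f = g"
    by (rule ext) (rule grad_eqI[OF f'])
  then show "(f has_derivative (\<lambda>h. grad f x \<bullet> h)) (at x)" "grad f differentiable (at x)"
    using f' g' unfolding differentiable_def by auto
qed

lemma C1_funI:
  "(\<And>x. (f has_derivative (\<lambda>h. g x \<bullet> h)) (at x)) \<Longrightarrow> continuous_on UNIV g \<Longrightarrow> C1_fun f"
  unfolding C1_fun_def by blast

lemma C1_fun_D:
  assumes "C1_fun f"
  shows C1_fun_has_derivative: "(f has_derivative (\<lambda>h. grad f x \<bullet> h)) (at x)"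
    and continuous_on_grad: "continuous_on UNIV (grad f)"
proof -
  obtain g where f': "\<And>x. (f has_derivative (\<lambda>h. g x \<bullet> h)) (at x)" and "continuous_on UNIV g"
    using assms unfolding C1_fun_def by blast
  moreover have "grad f = g"
    by (rule ext) (rule grad_eqI[OF f'])
  ultimately show "(f has_derivative (\<lambda>h. grad f x \<bullet> h)) (at x)" "continuous_on UNIV (grad f)"
    by simp_all
qed

lemma C2_fun_imp_C1_fun: "C2_fun f \<Longrightarrow> C1_fun f"
  using C2_fun_has_derivative C2_fun_grad_differentiable
  by (metis C1_funI continuous_at_imp_continuous_on differentiable_imp_continuous_within)

lemma C2_torus_imp_C1_torus: "C2_torus \<Lambda> a \<Longrightarrow> C1_torus \<Lambda> a"
  by (simp add: C2_torus_def C1_torus_def C2_fun_imp_C1_fun)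

lemma C1_fun_const: "C1_fun (\<lambda>x. c)"
  by (rule C1_funI[of _ "\<lambda>x. 0"]) simp_all

lemma C1_fun_add:
  assumes "C1_fun f" "C1_fun g"
  shows "C1_fun (\<lambda>x. f x + g x)"
proof -
  obtain F G where F: "\<And>x. (f has_derivative (\<lambda>h. F x \<bullet> h)) (at x)" "continuous_on UNIV F"
    and G: "\<And>x. (g has_derivative (\<lambda>h. G x \<bullet> h)) (at x)" "continuous_on UNIV G"
    using assms unfolding C1_fun_def by blast
  show ?thesis
  proof (rule C1_funI)
    show "((\<lambda>x. f x + g x) has_derivative (\<lambda>h. (F x + G x) \<bullet> h)) (at x)" for x
      using has_derivative_add[OF F(1) G(1)] by (simp add: inner_add_left)
    show "continuous_on UNIV (\<lambda>x. F x + G x)"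
      using F(2) G(2) by (rule continuous_on_add)
  qed
qed

lemma C1_fun_mult:
  assumes "C1_fun f" "C1_fun g"
  shows "C1_fun (\<lambda>x. f x * g x)"
proof -
  obtain F G where F: "\<And>x. (f has_derivative (\<lambda>h. F x \<bullet> h)) (at x)" "continuous_on UNIV F"
    and G: "\<And>x. (g has_derivative (\<lambda>h. G x \<bullet> h)) (at x)" "continuous_on UNIV G"
    using assms unfolding C1_fun_def by blast
  have "continuous_on UNIV f" "continuous_on UNIV g"
    using F(1) G(1) has_derivative_continuous by (blast intro: continuous_at_imp_continuous_on)+
  show ?thesis
  proof (rule C1_funI)
    show "((\<lambda>x. f x * g x) has_derivative (\<lambda>h. (f x *\<^sub>R G x + g x *\<^sub>R F x) \<bullet> h)) (at x)" for x
      using has_derivative_mult[OF F(1) G(1)] by (simp add: inner_add_left algebra_simps)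
    show "continuous_on UNIV (\<lambda>x. f x *\<^sub>R G x + g x *\<^sub>R F x)"
      using \<open>continuous_on UNIV f\<close> \<open>continuous_on UNIV g\<close> F(2) G(2) by (intro continuous_intros)
  qed
qed

lemma C1_fun_affine:
  assumes "C1_fun f"
  shows "C1_fun (\<lambda>x. c + k * (f x - c))"
proof -
  have "C1_fun (\<lambda>x. (c - k * c) + k * f x)"
    using C1_fun_add[OF C1_fun_const C1_fun_mult[OF C1_fun_const assms]] .
  moreover have "(\<lambda>x. (c - k * c) + k * f x) = (\<lambda>x. c + k * (f x - c))"
    by (simp add: fun_eq_iff algebra_simps)
  ultimately show ?thesis
    by simp
qed

lemma C1_fun_component_compose:
  assumes "\<And>t. (g has_real_derivative g' t) (at t)" "continuous_on UNIV g'"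
  shows "C1_fun (\<lambda>x::real^'n. g (x $ i))"
proof -
  have "((\<lambda>x::real^'n. g (x $ i)) has_derivative (\<lambda>h. (g' (x $ i) *\<^sub>R axis i 1) \<bullet> h)) (at x)" for x
  proof -
    have "((\<lambda>x::real^'n. x $ i) has_derivative (\<lambda>h. h $ i)) (at x)"
      by (rule bounded_linear_imp_has_derivative[OF bounded_linear_vec_nth])
    from has_derivative_compose[OF this assms(1)[unfolded has_field_derivative_def]]
    show ?thesis
      by (simp add: inner_axis' mult.commute)
  qed
  moreover have "continuous_on UNIV (\<lambda>x::real^'n. g' (x $ i))"
    by (rule continuous_on_compose2[OF assms(2)]) (auto intro: continuous_intros)
  then have "continuous_on UNIV (\<lambda>x::real^'n. g' (x $ i) *\<^sub>R axis i (1::real))"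
    by (rule Limits.continuous_on_scaleR[OF _ continuous_on_const])
  ultimately show ?thesis
    by (rule C1_funI[where g = "\<lambda>x. g' (x $ i) *\<^sub>R axis i 1"])
qed

section \<open>Unit normal and mean curvature of a ball\<close>

lemma C2_defining_zero_on_frontier:
  assumes "C2_defining \<phi> \<Omega>" "x \<in> frontier \<Omega>"
  shows "\<phi> x = 0"
proof -
  have \<Omega>: "\<Omega> = {x. \<phi> x < 0}" and "C2_fun \<phi>"
    using assms(1) unfolding C2_defining_def by auto
  then have cont: "continuous_on UNIV \<phi>"
    by (meson C2_fun_has_derivative has_derivative_continuous continuous_at_imp_continuous_on)
  then have "open \<Omega>"
    unfolding \<Omega> by (simp add: open_Collect_less)
  then have "\<phi> x \<ge> 0"
    using assms(2) \<Omega> by (auto simp: frontier_def interior_open)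
  moreover have "closure \<Omega> \<subseteq> {x. \<phi> x \<le> 0}"
    using cont by (intro closure_minimal) (auto simp: \<Omega> closed_Collect_le)
  then have "\<phi> x \<le> 0"
    using assms(2) by (auto simp: frontier_def)
  ultimately show ?thesis by simp
qed

lemma great_circle_in_sphere:
  fixes c y t :: "'a::real_inner"
  assumes "y \<in> sphere c r" "t \<bullet> (y - c) = 0" "norm t = r"
  shows "c + cos s *\<^sub>R (y - c) + sin s *\<^sub>R t \<in> sphere c r"
proof -
  define v where "v = y - c"
  have "v \<bullet> v = r\<^sup>2" "t \<bullet> t = r\<^sup>2" "t \<bullet> v = 0"
    using assms by (simp_all add: v_def dist_norm norm_minus_commute flip: power2_norm_eq_inner)
  then have "(norm (cos s *\<^sub>R v + sin s *\<^sub>R t))\<^sup>2 = (cos s)\<^sup>2 * r\<^sup>2 + (sin s)\<^sup>2 * r\<^sup>2"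
    unfolding power2_norm_eq_inner
    by (simp add: inner_add_left inner_add_right inner_commute power2_eq_square)
  also have "\<dots> = r\<^sup>2"
    by (simp flip: distrib_right)
  finally have "(norm (cos s *\<^sub>R v + sin s *\<^sub>R t))\<^sup>2 = r\<^sup>2" .
  then have "norm (cos s *\<^sub>R v + sin s *\<^sub>R t) = r"
    using assms(3) by (metis norm_ge_zero power2_eq_imp_eq)
  moreover have "dist c (c + cos s *\<^sub>R (y - c) + sin s *\<^sub>R t) = norm (cos s *\<^sub>R v + sin s *\<^sub>R t)"
    unfolding v_def dist_norm by (metis add_diff_cancel_left' add.assoc norm_minus_commute)
  ultimately show ?thesis
    by simp
qed

text \<open>Compose both functions with a great circle through the point.\<close>
lemma has_derivative_tangential_eq:
  fixes F G :: "'a::real_inner \<Rightarrow> 'b::real_normed_vector"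
  assumes r: "r > 0" and y: "y \<in> sphere c r" and FG: "\<And>z. z \<in> sphere c r \<Longrightarrow> F z = G z"
    and F: "(F has_derivative DF) (at y)" and G: "(G has_derivative DG) (at y)"
    and t: "t \<bullet> (y - c) = 0"
  shows "DF t = DG t"
proof (cases "t = 0")
  case True
  then show ?thesis
    using linear_0[OF has_derivative_linear[OF F]] linear_0[OF has_derivative_linear[OF G]] by simp
next
  case False
  define u where "u = (r / norm t) *\<^sub>R t"
  define \<gamma> where "\<gamma> s = c + cos s *\<^sub>R (y - c) + sin s *\<^sub>R u" for s
  have \<gamma>: "(\<gamma> has_derivative (\<lambda>h. h *\<^sub>R u)) (at 0)"
    unfolding \<gamma>_def by (auto intro!: derivative_eq_intros)
  have "\<gamma> 0 = y"
    by (simp add: \<gamma>_def)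
  then have F\<gamma>: "((\<lambda>s. F (\<gamma> s)) has_derivative (\<lambda>h. DF (h *\<^sub>R u))) (at 0)"
    and G\<gamma>: "((\<lambda>s. G (\<gamma> s)) has_derivative (\<lambda>h. DG (h *\<^sub>R u))) (at 0)"
    using has_derivative_compose[OF \<gamma>, of F DF] has_derivative_compose[OF \<gamma>, of G DG] F G
    by simp_all
  have "\<gamma> s \<in> sphere c r" for s
    unfolding \<gamma>_def by (rule great_circle_in_sphere[OF y]) (use t r False in \<open>auto simp: u_def\<close>)
  then have "(\<lambda>s. F (\<gamma> s)) = (\<lambda>s. G (\<gamma> s))"
    using FG by auto
  then have "(\<lambda>h. DF (h *\<^sub>R u)) = (\<lambda>h. DG (h *\<^sub>R u))"
    using has_derivative_unique[OF _ G\<gamma>] F\<gamma> by simp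
  then have "DF u = DG u"
    by (metis scaleR_one)
  then have "(r / norm t) *\<^sub>R DF t = (r / norm t) *\<^sub>R DG t"
    using linear_scale[OF has_derivative_linear[OF F]] linear_scale[OF has_derivative_linear[OF G]]
    by (simp add: u_def)
  then show ?thesis
    using r False by simp
qed

lemma radial_derivative_nonneg:
  fixes \<psi> :: "'a::real_normed_vector \<Rightarrow> real"
  assumes D: "(\<psi> has_derivative D) (at y)" and "\<psi> y = 0"
    and neg: "\<And>s. 0 < s \<Longrightarrow> s < 1 \<Longrightarrow> \<psi> (c + s *\<^sub>R (y - c)) < 0"
  shows "D (y - c) \<ge> 0"
proof (rule ccontr)
  assume "\<not> D (y - c) \<ge> 0"
  define f where "f s = \<psi> (c + s *\<^sub>R (y - c))" for s
  have "((\<lambda>s. c + s *\<^sub>R (y - c)) has_derivative (\<lambda>h. h *\<^sub>R (y - c))) (at 1)"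
    by (auto intro!: derivative_eq_intros)
  from has_derivative_compose[OF this, of \<psi> D]
  have "(f has_derivative (\<lambda>h. h * D (y - c))) (at 1)"
    using D linear_scale[OF has_derivative_linear[OF D]] by (simp add: f_def[abs_def])
  then have "(f has_real_derivative D (y - c)) (at 1)"
    by (simp add: has_field_derivative_def mult_commute_abs)
  then obtain e where "e > 0" "\<And>h. 0 < h \<Longrightarrow> h < e \<Longrightarrow> f 1 < f (1 - h)"
    using DERIV_neg_dec_left \<open>\<not> D (y - c) \<ge> 0\<close> by (metis not_le)
  then have "f 1 < f (1 - min (e/2) (1/2))"
    by simp
  moreover have "f (1 - min (e/2) (1/2)) < 0"
    unfolding f_def using \<open>e > 0\<close> by (intro neg) auto
  ultimately show False
    using \<open>\<psi> y = 0\<close> by (simp add: f_def)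
qed

lemma orthogonal_to_orthogonal_complement:
  fixes g v :: "'a::real_inner"
  assumes "v \<noteq> 0" and orth: "\<And>t. t \<bullet> v = 0 \<Longrightarrow> g \<bullet> t = 0"
  shows "g = ((g \<bullet> v) / (v \<bullet> v)) *\<^sub>R v"
proof -
  define u where "u = g - ((g \<bullet> v) / (v \<bullet> v)) *\<^sub>R v"
  have "u \<bullet> v = 0"
    using assms(1) by (simp add: u_def inner_diff_left)
  then have "g \<bullet> u = 0" and "v \<bullet> u = 0"
    using orth[of u] by (simp_all add: inner_commute)
  then have "u \<bullet> u = 0"
    by (simp add: u_def inner_diff_left)
  then show ?thesis
    by (simp add: u_def)
qed

text \<open>\<open>outward_normal\<close> and \<open>mean_curvature\<close> are computed from an arbitrary defining function,
  so the ball has to be handled for all of them: such a function vanishes on the sphere, hence its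
  gradient is radial there, and it points outwards because the function is negative inside.\<close>
lemma C2_defining_ball_unit_normal:
  fixes \<psi> :: "real^'n \<Rightarrow> real"
  assumes r: "r > 0" and \<psi>: "C2_defining \<psi> (ball c r)" and y: "y \<in> sphere c r"
  shows "grad \<psi> y /\<^sub>R norm (grad \<psi> y) = (y - c) /\<^sub>R r"
proof -
  define g v where "g = grad \<psi> y" and "v = y - c"
  have C2: "C2_fun \<psi>" and ball: "ball c r = {x. \<psi> x < 0}"
    and nz: "\<And>x. \<psi> x = 0 \<Longrightarrow> grad \<psi> x \<noteq> 0"
    using \<psi> unfolding C2_defining_def by auto
  have zero: "\<psi> z = 0" if "z \<in> sphere c r" for z
    using C2_defining_zero_on_frontier[OF \<psi>] that r by simp
  note D = C2_fun_has_derivative[OF C2]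
  have nv: "norm v = r"
    using y by (simp add: v_def dist_norm norm_minus_commute)
  define k where "k = (g \<bullet> v) / (v \<bullet> v)"
  have "v \<noteq> 0"
    using nv r by auto
  moreover have "g \<bullet> t = 0" if "t \<bullet> v = 0" for t
    using has_derivative_tangential_eq[OF r y zero D has_derivative_const] that
    by (simp add: g_def v_def)
  ultimately have g: "g = k *\<^sub>R v"
    unfolding k_def by (rule orthogonal_to_orthogonal_complement)
  have "g \<bullet> v \<ge> 0"
    unfolding v_def g_def
  proof (rule radial_derivative_nonneg[OF D zero[OF y]])
    fix s :: real assume "0 < s" "s < 1"
    then have "c + s *\<^sub>R (y - c) \<in> ball c r"
      using nv r by (simp add: dist_norm v_def)
    then show "\<psi> (c + s *\<^sub>R (y - c)) < 0"
      using ball by auto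
  qed
  then have "k \<ge> 0"
    by (simp add: k_def)
  moreover have "k \<noteq> 0"
    using g nz zero[OF y] by (auto simp: g_def)
  ultimately show ?thesis
    using g nv by (simp add: g_def v_def)
qed

lemma differentiable_unit_field:
  fixes g :: "'a::real_normed_vector \<Rightarrow> 'b::real_inner"
  assumes g: "g differentiable (at x)" and "g x \<noteq> 0"
  shows "(\<lambda>y. g y /\<^sub>R norm (g y)) differentiable (at x)"
proof -
  have "(\<lambda>y. norm (g y)) differentiable (at x)"
    using assms(2) by (intro differentiable_compose[OF _ g, unfolded o_def]) simp
  then show ?thesis
    using assms(2) by (intro differentiable_scaleR differentiable_inverse g) auto
qed

lemma has_derivative_unit_field_orthogonal:
  fixes N :: "'a::real_normed_vector \<Rightarrow> 'b::real_inner"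
  assumes N: "(N has_derivative DN) (at x)"
    and unit: "\<forall>\<^sub>F y in at x. norm (N y) = 1" "norm (N x) = 1"
  shows "DN h \<bullet> N x = 0"
proof -
  have "((\<lambda>y. N y \<bullet> N y) has_derivative (\<lambda>h. N x \<bullet> DN h + DN h \<bullet> N x)) (at x)"
    using has_derivative_inner[OF N N] .
  moreover have "\<forall>\<^sub>F y in at x. N y \<bullet> N y = 1"
    using unit(1) by eventually_elim (simp add: norm_eq_1)
  ultimately have "((\<lambda>y. 1::real) has_derivative (\<lambda>h. N x \<bullet> DN h + DN h \<bullet> N x)) (at x)"
    using unit(2) by (elim has_derivative_transform_eventually) (auto simp: norm_eq_1)
  then have "(\<lambda>h. N x \<bullet> DN h + DN h \<bullet> N x) = (\<lambda>h. 0)"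
    using has_derivative_const has_derivative_unique by blast
  then have "2 * (DN h \<bullet> N x) = 0"
    by (metis inner_commute mult_2)
  then show ?thesis
    by simp
qed

lemma trace_of_tangential_scaling:
  fixes L :: "real^'n \<Rightarrow> real^'n"
  assumes L: "linear L" and n: "norm n = 1"
    and normal: "\<And>h. L h \<bullet> n = 0" and tangential: "\<And>t. t \<bullet> n = 0 \<Longrightarrow> L t = t /\<^sub>R r"
  shows "(\<Sum>i\<in>UNIV. L (axis i 1) $ i) = (real CARD('n) - 1) / r"
proof -
  have nn: "n \<bullet> n = 1"
    using n by (simp add: norm_eq_1)
  have "L (axis i 1) $ i = n $ i * L n $ i + (1 - n $ i * n $ i) / r" for i
  proof -
    define t where "t = axis i 1 - n $ i *\<^sub>R n"
    have "t \<bullet> n = 0"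
      using nn by (simp add: t_def inner_diff_left inner_axis')
    then have "L (axis i 1) = n $ i *\<^sub>R L n + t /\<^sub>R r"
      using tangential linear_add[OF L] linear_scale[OF L] unfolding t_def
      by (metis add.commute diff_add_cancel)
    then show ?thesis
      by (simp add: t_def axis_def divide_simps)
  qed
  then have "(\<Sum>i\<in>UNIV. L (axis i 1) $ i) = L n \<bullet> n + (\<Sum>i\<in>UNIV. 1 - n $ i * n $ i) / r"
    by (simp add: sum.distrib inner_vec_def sum_divide_distrib mult.commute)
  also have "\<dots> = (real CARD('n) - 1) / r"
    using normal nn by (simp add: sum_subtractf inner_vec_def)
  finally show ?thesis .
qed

text \<open>The unit normal field has derivative orthogonal to itself (its length is constant) and equal
  to \<open>1/r\<close> times the identity on tangent vectors (it agrees with \<open>(y - c)/r\<close> on the sphere), so its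
  trace is \<open>(d - 1)/r\<close>.\<close>
lemma C2_defining_ball_divergence:
  fixes \<psi> :: "real^'n \<Rightarrow> real"
  assumes r: "r > 0" and \<psi>: "C2_defining \<psi> (ball c r)" and \<xi>: "\<xi> \<in> sphere c r"
  shows "divergence (\<lambda>y. grad \<psi> y /\<^sub>R norm (grad \<psi> y)) \<xi> = (real CARD('n) - 1) / r"
proof -
  define g where "g = grad \<psi>"
  define N where "N y = g y /\<^sub>R norm (g y)" for y
  have "\<psi> \<xi> = 0"
    using C2_defining_zero_on_frontier[OF \<psi>] r \<xi> by (simp add: frontier_ball)
  then have g\<xi>: "g \<xi> \<noteq> 0"
    using \<psi> by (simp add: C2_defining_def g_def)
  have gd: "g differentiable (at \<xi>)"
    using C2_fun_grad_differentiable \<psi> unfolding C2_defining_def g_def by blast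
  have "N differentiable (at \<xi>)"
    unfolding N_def[abs_def] by (rule differentiable_unit_field[OF gd g\<xi>])
  then obtain DN where DN: "(N has_derivative DN) (at \<xi>)"
    unfolding differentiable_def by blast
  have "\<forall>\<^sub>F y in at \<xi>. g y \<noteq> 0"
    using tendsto_imp_eventually_ne[OF _ g\<xi>] differentiable_imp_continuous_within[OF gd]
    by (simp add: continuous_at)
  then have unit: "\<forall>\<^sub>F y in at \<xi>. norm (N y) = 1"
    by eventually_elim (simp add: N_def)
  have N\<xi>: "N \<xi> = (\<xi> - c) /\<^sub>R r"
    using C2_defining_ball_unit_normal[OF r \<psi> \<xi>] by (simp add: N_def g_def)
  have "DN t = t /\<^sub>R r" if "t \<bullet> (\<xi> - c) = 0" for t
  proof -
    have "((\<lambda>y. (y - c) /\<^sub>R r) has_derivative (\<lambda>t. t /\<^sub>R r)) (at \<xi>)"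
      by (auto intro!: derivative_eq_intros)
    moreover have "N z = (z - c) /\<^sub>R r" if "z \<in> sphere c r" for z
      using C2_defining_ball_unit_normal[OF r \<psi> that] by (simp add: N_def g_def)
    ultimately show ?thesis
      using has_derivative_tangential_eq[OF r \<xi> _ DN _ that] by metis
  qed
  moreover have "norm (N \<xi>) = 1"
    using g\<xi> by (simp add: N_def)
  ultimately have "(\<Sum>i\<in>UNIV. DN (axis i 1) $ i) = (real CARD('n) - 1) / r"
    using trace_of_tangential_scaling[OF has_derivative_linear[OF DN], of "N \<xi>" r]
      has_derivative_unit_field_orthogonal[OF DN unit] r
    by (simp add: N\<xi>)
  moreover have "frechet_derivative (\<lambda>y. grad \<psi> y /\<^sub>R norm (grad \<psi> y)) (at \<xi>) = DN"
    using frechet_derivative_at[OF DN] by (simp add: N_def[abs_def] g_def)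
  ultimately show ?thesis
    by (simp add: divergence_def)
qed

lemma mat_2_mult_vec: "mat 2 *v h = (2::real) *\<^sub>R (h::real^'n)"
proof -
  have "(\<Sum>j\<in>UNIV. (if i = j then 2 else 0) * h $ j) = 2 * h $ i" for i
    by (simp add: if_distrib[of "\<lambda>a. a * _"] cong: if_cong)
  then show ?thesis
    by (simp add: vec_eq_iff matrix_vector_mult_def mat_def)
qed

lemma C2_defining_ball:
  fixes c :: "real^'n"
  assumes r: "r > 0"
  shows "C2_defining (\<lambda>x. (x - c) \<bullet> (x - c) - r\<^sup>2) (ball c r)"
proof -
  have D: "((\<lambda>x. (x - c) \<bullet> (x - c) - r\<^sup>2) has_derivative (\<lambda>h. (2 *\<^sub>R (x - c)) \<bullet> h)) (at x)" for x
    by (auto intro!: derivative_eq_intros simp: inner_commute algebra_simps)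
  moreover have "((\<lambda>x. 2 *\<^sub>R (x - c)) has_derivative (\<lambda>h. mat 2 *v h)) (at x)" for x
    by (auto intro!: derivative_eq_intros simp: mat_2_mult_vec)
  ultimately have C2: "C2_fun (\<lambda>x. (x - c) \<bullet> (x - c) - r\<^sup>2)"
    unfolding C2_fun_def using continuous_on_const[of UNIV "mat 2 :: real^'n^'n"]
    by (intro exI[of _ "\<lambda>x. 2 *\<^sub>R (x - c)"] exI[of _ "\<lambda>x. mat 2"]) blast
  have ball: "ball c r = {x. (x - c) \<bullet> (x - c) - r\<^sup>2 < 0}"
  proof (rule set_eqI)
    fix x
    have "norm (x - c) < r \<longleftrightarrow> (norm (x - c))\<^sup>2 < r\<^sup>2"
    proof
      show "norm (x - c) < r \<Longrightarrow> (norm (x - c))\<^sup>2 < r\<^sup>2"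
        by (rule power_strict_mono) auto
      show "(norm (x - c))\<^sup>2 < r\<^sup>2 \<Longrightarrow> norm (x - c) < r"
        by (rule power_less_imp_less_base) (use r in auto)
    qed
    moreover have "dist c x = norm (x - c)"
      by (metis dist_commute dist_norm)
    ultimately show "x \<in> ball c r \<longleftrightarrow> x \<in> {x. (x - c) \<bullet> (x - c) - r\<^sup>2 < 0}"
      by (simp add: power2_norm_eq_inner)
  qed
  have "grad (\<lambda>x. (x - c) \<bullet> (x - c) - r\<^sup>2) x \<noteq> 0" if "(x - c) \<bullet> (x - c) - r\<^sup>2 = 0" for x
  proof -
    have "x \<noteq> c"
      using that r by auto
    then show ?thesis
      using grad_eqI[OF D] by simp
  qed
  with C2 ball show ?thesis
    unfolding C2_defining_def by blast
qed

lemma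
  fixes c :: "real^'n"
  assumes r: "r > 0" and \<xi>: "\<xi> \<in> sphere c r"
  shows outward_normal_ball: "outward_normal (ball c r) \<xi> = (\<xi> - c) /\<^sub>R r"
    and mean_curvature_ball: "mean_curvature (ball c r) \<xi> = (real CARD('n) - 1) / r"
proof -
  define \<phi> where "\<phi> = (SOME \<phi>. C2_defining \<phi> (ball c r))"
  have \<phi>: "C2_defining \<phi> (ball c r)"
    unfolding \<phi>_def by (rule someI_ex[of "\<lambda>\<phi>. C2_defining \<phi> (ball c r)"])
      (use C2_defining_ball[OF r] in blast)
  show "outward_normal (ball c r) \<xi> = (\<xi> - c) /\<^sub>R r"
    unfolding outward_normal_def Let_def \<phi>_def[symmetric]
    by (rule C2_defining_ball_unit_normal[OF r \<phi> \<xi>])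
  show "mean_curvature (ball c r) \<xi> = (real CARD('n) - 1) / r"
    unfolding mean_curvature_def Let_def \<phi>_def[symmetric]
    by (rule C2_defining_ball_divergence[OF r \<phi> \<xi>])
qed

lemma C2_boundary_ball: "r > 0 \<Longrightarrow> C2_boundary (ball (c::real^'n) r)"
  using C2_defining_ball by (auto simp: C2_boundary_def)

section \<open>Smooth approximation on the torus\<close>

definition torus_embedding :: "real^'n \<Rightarrow> (real^'n) \<times> (real^'n)" where
  "torus_embedding x = ((\<chi> i. cos (2 * pi * x $ i)), (\<chi> i. sin (2 * pi * x $ i)))"

lemma continuous_on_torus_embedding: "continuous_on UNIV torus_embedding"
  unfolding torus_embedding_def[abs_def] by (intro continuous_intros)

lemma torus_embedding_eq_iff: "torus_embedding x = torus_embedding y \<longleftrightarrow> int_vector (y - x)"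
proof -
  have "(sin (2 * pi * y $ i) = sin (2 * pi * x $ i) \<and> cos (2 * pi * y $ i) = cos (2 * pi * x $ i))
      \<longleftrightarrow> y $ i - x $ i \<in> \<int>" for i
  proof -
    have "2 * pi * y $ i = 2 * pi * x $ i + 2 * pi * n \<longleftrightarrow> y $ i - x $ i = n" for n :: int
    proof -
      have "2 * pi * x $ i + 2 * pi * n = 2 * pi * (x $ i + n)"
        by (simp add: distrib_left)
      then show ?thesis
        by auto
    qed
    then show ?thesis
      unfolding sin_cos_eq_iff by (auto simp: Ints_def)
  qed
  then show ?thesis
    by (auto simp: torus_embedding_def int_vector_def vec_eq_iff)
qed

lemma int_vector_diff_frac: "int_vector (x - (\<chi> i. frac (x $ i)))"
  by (simp add: int_vector_def frac_def)

lemma frac_vec_in_unit_cube: "(\<chi> i. frac (x $ i)) \<in> cbox 0 (1::real^'n)"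
  by (auto simp: mem_box_cart less_imp_le[OF frac_lt_1])

lemma torus_embedding_in_image_cube: "torus_embedding x \<in> torus_embedding ` cbox 0 1"
proof -
  have "torus_embedding (\<chi> i. frac (x $ i)) = torus_embedding x"
    using int_vector_diff_frac[of x] by (simp add: torus_embedding_eq_iff)
  then show ?thesis
    by (rule image_eqI[OF sym frac_vec_in_unit_cube])
qed

definition torus_lift :: "(real^'n \<Rightarrow> real) \<Rightarrow> (real^'n) \<times> (real^'n) \<Rightarrow> real" where
  "torus_lift a y = a (SOME x. torus_embedding x = y)"

lemma torus_lift_torus_embedding:
  assumes "periodic a"
  shows "torus_lift a (torus_embedding x) = a x"
proof -
  have "torus_embedding x = torus_embedding (SOME x'. torus_embedding x' = torus_embedding x)"
    by (rule sym, rule someI) (rule refl)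
  then have "int_vector ((SOME x'. torus_embedding x' = torus_embedding x) - x)"
    by (simp only: torus_embedding_eq_iff)
  then have "a (x + ((SOME x'. torus_embedding x' = torus_embedding x) - x)) = a x"
    using assms unfolding periodic_def by blast
  then show ?thesis
    by (simp add: torus_lift_def)
qed

lemma continuous_on_torus_lift:
  fixes a :: "real^'n \<Rightarrow> real"
  assumes a: "continuous_on UNIV a" "periodic a"
  shows "continuous_on (torus_embedding ` cbox 0 1) (torus_lift a)"
proof (rule continuous_from_closed_graph)
  show "compact (a ` cbox 0 1)"
    by (intro compact_continuous_image continuous_on_subset[OF a(1)]) auto
  show "torus_lift a \<in> torus_embedding ` cbox 0 1 \<rightarrow> a ` cbox 0 1"
    by (auto simp: torus_lift_torus_embedding[OF a(2)])
  have "(\<lambda>y. (y, torus_lift a y)) ` torus_embedding ` cbox 0 1 = (\<lambda>x. (torus_embedding x, a x)) ` cbox 0 1"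
    unfolding image_image torus_lift_torus_embedding[OF a(2)] ..
  moreover have "compact ((\<lambda>x. (torus_embedding x, a x)) ` cbox 0 (1::real^'n))"
    by (intro compact_continuous_image continuous_on_Pair
        continuous_on_subset[OF continuous_on_torus_embedding] continuous_on_subset[OF a(1)]) auto
  ultimately show "closed ((\<lambda>y. (y, torus_lift a y)) ` torus_embedding ` cbox 0 1)"
    by (simp add: compact_imp_closed)
qed

lemma C1_fun_torus_embedding_components:
  shows "C1_fun (\<lambda>x::real^'n. fst (torus_embedding x) $ i)"
    and "C1_fun (\<lambda>x::real^'n. snd (torus_embedding x) $ i)"
proof -
  have "C1_fun (\<lambda>x::real^'n. cos (2 * pi * x $ i))"
    by (rule C1_fun_component_compose[where g' = "\<lambda>t. - sin (2 * pi * t) * (2 * pi)"])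
      (auto intro!: derivative_eq_intros continuous_intros)
  moreover have "C1_fun (\<lambda>x::real^'n. sin (2 * pi * x $ i))"
    by (rule C1_fun_component_compose[where g' = "\<lambda>t. cos (2 * pi * t) * (2 * pi)"])
      (auto intro!: derivative_eq_intros continuous_intros)
  ultimately show "C1_fun (\<lambda>x::real^'n. fst (torus_embedding x) $ i)"
    and "C1_fun (\<lambda>x::real^'n. snd (torus_embedding x) $ i)"
    by (simp_all add: torus_embedding_def)
qed

text \<open>Stone--Weierstrass on the image of the torus in \<open>\<real>\<^sup>2\<^sup>d\<close> under \<open>torus_embedding\<close>: the
  coordinate functions pull back to smooth periodic functions and separate points.\<close>
lemma periodic_C1_approximation:
  fixes a :: "real^'n \<Rightarrow> real"
  assumes a: "continuous_on UNIV a" "periodic a" and e: "e > 0"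
  obtains b where "C1_fun b" "periodic b" "\<And>x. \<bar>a x - b x\<bar> < e"
proof -
  define T where "T = torus_embedding ` cbox 0 (1::real^'n)"
  define P where "P g \<longleftrightarrow> continuous_on T g \<and> C1_fun (\<lambda>x. g (torus_embedding x))"
    for g :: "(real^'n) \<times> (real^'n) \<Rightarrow> real"
  have "compact T"
    unfolding T_def
    by (intro compact_continuous_image continuous_on_subset[OF continuous_on_torus_embedding]) auto
  then have "\<exists>g. P g \<and> (\<forall>y\<in>T. \<bar>torus_lift a y - g y\<bar> < e)"
  proof (rule Stone_Weierstrass_HOL[OF _ _ _ _ _ _ continuous_on_torus_lift[OF a, folded T_def] e])
    show "P (\<lambda>y. c)" for c
      by (simp add: P_def C1_fun_const)
    show "P f \<Longrightarrow> continuous_on T f" for f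
      by (simp add: P_def)
    show "P f \<and> P g \<Longrightarrow> P (\<lambda>x. f x + g x)" for f g
      unfolding P_def by (auto intro: continuous_on_add C1_fun_add)
    show "P f \<and> P g \<Longrightarrow> P (\<lambda>x. f x * g x)" for f g
      unfolding P_def by (auto intro: continuous_on_mult C1_fun_mult)
    show "\<exists>f. P f \<and> f x \<noteq> f y" if "x \<in> T \<and> y \<in> T \<and> x \<noteq> y" for x y
    proof -
      have "\<exists>i. fst x $ i \<noteq> fst y $ i \<or> snd x $ i \<noteq> snd y $ i"
        using that by (auto simp: prod_eq_iff vec_eq_iff)
      moreover have "P (\<lambda>y. fst y $ i)" "P (\<lambda>y. snd y $ i)" for i
        unfolding P_def using C1_fun_torus_embedding_components by (auto intro!: continuous_intros)
      ultimately show ?thesis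
        by blast
    qed
  qed
  then obtain g where g: "P g" "\<And>y. y \<in> T \<Longrightarrow> \<bar>torus_lift a y - g y\<bar> < e"
    by blast
  show ?thesis
  proof (rule that)
    show "C1_fun (\<lambda>x. g (torus_embedding x))"
      using g(1) by (simp add: P_def)
    have "torus_embedding x = torus_embedding (x + z)" if "int_vector z" for x z :: "real^'n"
      using that by (simp add: torus_embedding_eq_iff)
    then show "periodic (\<lambda>x. g (torus_embedding x))"
      unfolding periodic_def by metis
    show "\<bar>a x - g (torus_embedding x)\<bar> < e" for x
      using g(2)[OF torus_embedding_in_image_cube[of x, folded T_def]]
      by (simp add: torus_lift_torus_embedding[OF a(2)])
  qed
qed

text \<open>Contracting the values towards the midpoint of \<open>[1, \<Lambda>]\<close> leaves room for the bump.\<close>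
definition midpoint_shrink :: "real \<Rightarrow> real \<Rightarrow> (real^'n \<Rightarrow> real) \<Rightarrow> real^'n \<Rightarrow> real" where
  "midpoint_shrink \<Lambda> \<theta> f x = (1 + \<Lambda>) / 2 + (1 - \<theta>) * (f x - (1 + \<Lambda>) / 2)"

lemma midpoint_shrink_dist:
  assumes "\<bar>f x - (1 + \<Lambda>) / 2\<bar> \<le> R" "0 \<le> \<theta>" "\<theta> \<le> 1"
  shows "\<bar>midpoint_shrink \<Lambda> \<theta> f x - (1 + \<Lambda>) / 2\<bar> \<le> (1 - \<theta>) * R"
    and "\<bar>f x - midpoint_shrink \<Lambda> \<theta> f x\<bar> \<le> \<theta> * R"
proof -
  have "midpoint_shrink \<Lambda> \<theta> f x - (1 + \<Lambda>) / 2 = (1 - \<theta>) * (f x - (1 + \<Lambda>) / 2)"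
    unfolding midpoint_shrink_def by (rule add_diff_cancel_left')
  then have "\<bar>midpoint_shrink \<Lambda> \<theta> f x - (1 + \<Lambda>) / 2\<bar> = (1 - \<theta>) * \<bar>f x - (1 + \<Lambda>) / 2\<bar>"
    using assms(3) by (simp add: abs_mult)
  then show "\<bar>midpoint_shrink \<Lambda> \<theta> f x - (1 + \<Lambda>) / 2\<bar> \<le> (1 - \<theta>) * R"
    using assms by (simp add: mult_left_mono)
  have "f x - midpoint_shrink \<Lambda> \<theta> f x = \<theta> * (f x - (1 + \<Lambda>) / 2)"
    by (simp add: midpoint_shrink_def left_diff_distrib)
  then have "\<bar>f x - midpoint_shrink \<Lambda> \<theta> f x\<bar> = \<theta> * \<bar>f x - (1 + \<Lambda>) / 2\<bar>"
    using assms(2) by (simp add: abs_mult)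
  then show "\<bar>f x - midpoint_shrink \<Lambda> \<theta> f x\<bar> \<le> \<theta> * R"
    using assms by (simp add: mult_left_mono)
qed

lemma C1_fun_midpoint_shrink: "C1_fun f \<Longrightarrow> C1_fun (midpoint_shrink \<Lambda> \<theta> f)"
  unfolding midpoint_shrink_def[abs_def] by (rule C1_fun_affine)

lemma periodic_midpoint_shrink: "periodic f \<Longrightarrow> periodic (midpoint_shrink \<Lambda> \<theta> f)"
  by (simp add: periodic_def midpoint_shrink_def)

lemma grad_midpoint_shrink:
  "C1_fun f \<Longrightarrow> grad (midpoint_shrink \<Lambda> \<theta> f) x = (1 - \<theta>) *\<^sub>R grad f x"
  unfolding midpoint_shrink_def[abs_def]
  by (rule grad_eqI) (auto intro!: derivative_eq_intros C1_fun_has_derivative)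

lemma norm_grad_midpoint_shrink_le:
  assumes "C1_fun f" "0 \<le> \<theta>" "\<theta> \<le> 1"
  shows "norm (grad (midpoint_shrink \<Lambda> \<theta> f) x) \<le> norm (grad f x)"
proof -
  have "norm (grad (midpoint_shrink \<Lambda> \<theta> f) x) = (1 - \<theta>) * norm (grad f x)"
    using assms by (simp add: grad_midpoint_shrink)
  also have "\<dots> \<le> norm (grad f x)"
    using assms by (intro mult_left_le_one_le) auto
  finally show ?thesis .
qed

lemma
  assumes "C1_fun a"
  shows C1_fun_minus_midpoint_shrink: "C1_fun (\<lambda>x. a x - midpoint_shrink \<Lambda> \<theta> a x)"
    and grad_minus_midpoint_shrink: "grad (\<lambda>x. a x - midpoint_shrink \<Lambda> \<theta> a x) x = \<theta> *\<^sub>R grad a x"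
proof -
  have D: "((\<lambda>x. a x - midpoint_shrink \<Lambda> \<theta> a x) has_derivative (\<lambda>h. (\<theta> *\<^sub>R grad a x) \<bullet> h)) (at x)"
    for x
    using has_derivative_diff[OF C1_fun_has_derivative[OF assms]
        C1_fun_has_derivative[OF C1_fun_midpoint_shrink[OF assms]]]
    by (simp add: grad_midpoint_shrink[OF assms] algebra_simps inner_diff_left)
  have "continuous_on UNIV (\<lambda>x. \<theta> *\<^sub>R grad a x)"
    by (intro continuous_intros continuous_on_grad[OF assms])
  then show "C1_fun (\<lambda>x. a x - midpoint_shrink \<Lambda> \<theta> a x)"
    by (rule C1_funI[OF D])
  show "grad (\<lambda>x. a x - midpoint_shrink \<Lambda> \<theta> a x) x = \<theta> *\<^sub>R grad a x"
    by (rule grad_eqI[OF D])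
qed

lemma C0_torus_C1_torus_approximation:
  fixes a :: "real^'n \<Rightarrow> real"
  assumes a: "C0_torus \<Lambda> a" and \<Lambda>: "1 \<le> \<Lambda>" and e: "0 < e"
  obtains b where "C1_torus \<Lambda> b" "\<And>x. \<bar>a x - b x\<bar> \<le> e"
proof -
  obtain b0 where b0: "C1_fun b0" "periodic b0" "\<And>x. \<bar>a x - b0 x\<bar> < e / 2"
    using periodic_C1_approximation[of a "e / 2"] a e by (auto simp: C0_torus_def)
  define R where "R = (\<Lambda> - 1) / 2 + e / 2"
  define \<theta> where "\<theta> = (e / 2) / R"
  have "0 < R"
    unfolding R_def using \<Lambda> e by argo
  moreover have "e / 2 \<le> R"
    using \<Lambda> by (simp add: R_def)
  ultimately have R: "0 < R" "e / 2 \<le> R" .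
  then have \<theta>: "0 \<le> \<theta>" "\<theta> \<le> 1"
    using e by (simp_all add: \<theta>_def divide_le_eq_1_pos)
  have bound: "\<bar>b0 x - (1 + \<Lambda>) / 2\<bar> \<le> R" for x
  proof -
    have "1 \<le> a x" "a x \<le> \<Lambda>"
      using a by (simp_all add: C0_torus_def)
    then show ?thesis
      using b0(3)[of x] unfolding R_def by argo
  qed
  note shrink = midpoint_shrink_dist[where f = b0, OF bound \<theta>]
  have "(1 - \<theta>) * R = (\<Lambda> - 1) / 2" "\<theta> * R = e / 2"
    using R by (simp_all add: \<theta>_def R_def field_simps)
  show ?thesis
  proof (rule that)
    have "1 \<le> midpoint_shrink \<Lambda> \<theta> b0 x \<and> midpoint_shrink \<Lambda> \<theta> b0 x \<le> \<Lambda>" for x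
      using shrink(1)[where x = x] \<open>(1 - \<theta>) * R = (\<Lambda> - 1) / 2\<close> by argo
    then show "C1_torus \<Lambda> (midpoint_shrink \<Lambda> \<theta> b0)"
      using b0 by (simp add: C1_torus_def C1_fun_midpoint_shrink periodic_midpoint_shrink)
    show "\<bar>a x - midpoint_shrink \<Lambda> \<theta> b0 x\<bar> \<le> e" for x
      using b0(3)[of x] shrink(2)[where x = x] \<open>\<theta> * R = e / 2\<close> by argo
  qed
qed

section \<open>A periodic bump that is steep on a sphere\<close>

definition ramp_sq :: "real \<Rightarrow> real" where
  "ramp_sq t = (max 0 t)\<^sup>2"

lemma has_real_derivative_ramp_sq: "(ramp_sq has_real_derivative 2 * max 0 t) (at t)"
proof -
  consider "t > 0" | "t < 0" | "t = 0"
    by linarith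
  then show ?thesis
  proof cases
    case 1
    have "((\<lambda>t. t\<^sup>2) has_real_derivative 2 * t) (at t)"
      by (auto intro!: derivative_eq_intros)
    from has_field_derivative_transform_within_open[OF this, of "{0<..}" ramp_sq]
    show ?thesis
      using 1 by (auto simp: ramp_sq_def)
  next
    case 2
    have "((\<lambda>t. 0) has_real_derivative 0) (at t)"
      by simp
    from has_field_derivative_transform_within_open[OF this, of "{..<0}" ramp_sq]
    show ?thesis
      using 2 by (auto simp: ramp_sq_def)
  next
    case 3
    have "((\<lambda>y. (ramp_sq y - ramp_sq 0) / (y - 0)) \<longlongrightarrow> 0) (at 0)"
    proof (rule Lim_null_comparison)
      show "\<forall>\<^sub>F y in at 0. norm ((ramp_sq y - ramp_sq 0) / (y - 0)) \<le> \<bar>y\<bar>"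
      proof (rule always_eventually, intro allI)
        fix y :: real
        show "norm ((ramp_sq y - ramp_sq 0) / (y - 0)) \<le> \<bar>y\<bar>"
          by (cases "y > 0") (auto simp: ramp_sq_def power2_eq_square abs_mult divide_simps)
      qed
      show "((\<lambda>y. \<bar>y\<bar>) \<longlongrightarrow> 0) (at (0::real))"
        using tendsto_rabs[OF tendsto_ident_at[of "0::real" UNIV]] by simp
    qed
    then show ?thesis
      using 3 by (simp add: has_field_derivative_iff)
  qed
qed

text \<open>A quadratic spline, equal to \<open>1\<close> for \<open>u \<le> -1\<close> and to \<open>0\<close> for \<open>u \<ge> 1\<close>, whose derivative is
  the negative hat function \<open>-max 0 (1 - \<bar>u\<bar>)\<close>.\<close>
definition smooth_step :: "real \<Rightarrow> real" where
  "smooth_step u = (ramp_sq (1 - u) - 2 * ramp_sq (- u) + ramp_sq (- 1 - u)) / 2"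

lemma has_real_derivative_smooth_step:
  "(smooth_step has_real_derivative - max 0 (1 - \<bar>u\<bar>)) (at u)"
proof -
  have "(smooth_step has_real_derivative - max 0 (1 - u) + 2 * max 0 (- u) - max 0 (- 1 - u)) (at u)"
    unfolding smooth_step_def[abs_def]
    by (auto intro!: derivative_eq_intros DERIV_chain2[OF has_real_derivative_ramp_sq] simp: field_simps)
  moreover have "- max 0 (1 - u) + 2 * max 0 (- u) - max 0 (- 1 - u) = - max 0 (1 - \<bar>u\<bar>)"
    by (auto simp: max_def)
  ultimately show ?thesis
    by simp
qed

lemma smooth_step_bounds: "0 \<le> smooth_step u \<and> smooth_step u \<le> 1"
proof -
  consider "u \<le> -1" | "-1 < u" "u \<le> 0" | "0 < u" "u \<le> 1" | "1 < u"
    by linarith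
  then show ?thesis
  proof cases
    case 2
    have "smooth_step u = 1 - (1 + u)\<^sup>2 / 2"
      using 2 by (simp add: smooth_step_def ramp_sq_def max_def power2_eq_square field_simps)
    moreover have "(1 + u)\<^sup>2 \<le> 1"
      using 2 by (simp add: power_le_one)
    ultimately show ?thesis
      by simp
  next
    case 3
    have "smooth_step u = (1 - u)\<^sup>2 / 2"
      using 3 by (simp add: smooth_step_def ramp_sq_def max_def power2_eq_square algebra_simps)
    moreover have "(1 - u)\<^sup>2 \<le> 1"
      using 3 by (simp add: power_le_one)
    ultimately show ?thesis
      using zero_le_power2[of "1 - u"] by linarith
  qed (simp_all add: smooth_step_def ramp_sq_def max_def power2_eq_square algebra_simps)
qed

lemma smooth_step_eq_0: "1 \<le> u \<Longrightarrow> smooth_step u = 0"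
  by (simp add: smooth_step_def ramp_sq_def max_def)

text \<open>A radial profile in the squared distance \<open>s\<close> from a centre: it drops from \<open>m w\<close> to \<open>0\<close>
  across the shell \<open>\<bar>s - 1/16\<bar> \<le> w\<close>, with slope \<open>-m\<close> on the sphere \<open>s = 1/16\<close>.\<close>
definition shell_step :: "real \<Rightarrow> real \<Rightarrow> real \<Rightarrow> real" where
  "shell_step m w s = m * w * smooth_step ((s - 1/16) / w)"

definition shell_step_deriv :: "real \<Rightarrow> real \<Rightarrow> real \<Rightarrow> real" where
  "shell_step_deriv m w s = - m * max 0 (1 - \<bar>(s - 1/16) / w\<bar>)"

lemma has_real_derivative_shell_step:
  assumes "w > 0"
  shows "(shell_step m w has_real_derivative shell_step_deriv m w s) (at s)"
proof -
  have "((\<lambda>s. (s - 1/16) / w) has_real_derivative 1 / w) (at s)"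
    using assms by (auto intro!: derivative_eq_intros)
  from DERIV_chain2[OF has_real_derivative_smooth_step this]
  have "((\<lambda>s. m * w * smooth_step ((s - 1/16) / w)) has_real_derivative
      m * w * (- max 0 (1 - \<bar>(s - 1/16) / w\<bar>) * (1 / w))) (at s)"
    by (rule DERIV_cmult)
  then show ?thesis
    using assms by (simp add: shell_step_def[abs_def] shell_step_deriv_def)
qed

lemma continuous_on_shell_step_deriv: "continuous_on UNIV (shell_step_deriv m w)"
  unfolding shell_step_deriv_def[abs_def] divide_inverse by (intro continuous_intros)

lemma shell_step_vanishes:
  assumes "0 < w" "w \<le> 1/16" "1/8 \<le> s"
  shows "shell_step m w s = 0" "shell_step_deriv m w s = 0"
proof -
  define u where "u = (s - 1/16) / w"
  have "1 \<le> u"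
    using assms by (simp add: u_def field_simps)
  then show "shell_step m w s = 0" "shell_step_deriv m w s = 0"
    unfolding shell_step_def shell_step_deriv_def u_def[symmetric]
    by (simp_all add: smooth_step_eq_0 max_def)
qed

definition cell_center :: "real^'n \<Rightarrow> real^'n" where
  "cell_center x = (\<chi> i. of_int \<lfloor>x $ i\<rfloor> + 1/2)"

definition cube_center :: "real^'n" where
  "cube_center = (\<chi> i. 1/2)"

definition periodic_bump :: "real \<Rightarrow> real \<Rightarrow> real^'n \<Rightarrow> real" where
  "periodic_bump m w x = shell_step m w ((norm (x - cell_center x))\<^sup>2)"

definition periodic_bump_grad :: "real \<Rightarrow> real \<Rightarrow> real^'n \<Rightarrow> real^'n" where
  "periodic_bump_grad m w x =
    shell_step_deriv m w ((norm (x - cell_center x))\<^sup>2) *\<^sub>R (2 *\<^sub>R (x - cell_center x))"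

lemma cell_center_add_int_vector:
  assumes "int_vector z"
  shows "cell_center (x + z) = cell_center x + z"
proof -
  have "\<lfloor>x $ i + z $ i\<rfloor> = \<lfloor>x $ i\<rfloor> + \<lfloor>z $ i\<rfloor>" "of_int \<lfloor>z $ i\<rfloor> = z $ i" for i
    using assms by (auto simp: int_vector_def elim!: Ints_cases)
  then show ?thesis
    by (simp add: cell_center_def vec_eq_iff)
qed

lemma periodic_periodic_bump: "periodic (periodic_bump m w)"
  by (simp add: periodic_def periodic_bump_def cell_center_add_int_vector)

lemma periodic_bump_bounds:
  assumes "0 \<le> m" "0 < w"
  shows "0 \<le> periodic_bump m w x \<and> periodic_bump m w x \<le> m * w"
proof -
  define S where "S = smooth_step (((norm (x - cell_center x))\<^sup>2 - 1/16) / w)"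
  have "0 \<le> S" "S \<le> 1"
    using smooth_step_bounds unfolding S_def by blast+
  moreover have "periodic_bump m w x = m * w * S"
    by (simp add: periodic_bump_def shell_step_def S_def)
  ultimately show ?thesis
    using assms by (simp add: mult_left_le)
qed

lemma half_integer_far_from_near_integer:
  fixes a :: real
  assumes "\<bar>a - of_int k\<bar> < 1/8"
  shows "3/8 \<le> \<bar>a - (of_int j + 1/2)\<bar>"
proof (cases "k \<le> j")
  case True
  then have "real_of_int k \<le> of_int j"
    by simp
  then show ?thesis
    using assms by linarith
next
  case False
  then have "real_of_int j + 1 \<le> of_int k"
    by linarith
  then show ?thesis
    using assms by linarith
qed

lemma far_from_cell_centers:
  fixes x y z :: "real^'n"
  assumes close: "dist y x < 1/8" and i: "\<lfloor>y $ i\<rfloor> \<noteq> \<lfloor>x $ i\<rfloor>"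
  shows "1/8 \<le> (norm (y - cell_center z))\<^sup>2"
proof -
  have "\<bar>y $ i - x $ i\<bar> < 1/8"
    using component_le_norm_cart[of "y - x" i] close by (simp add: dist_norm)
  then have "\<bar>y $ i - of_int (max \<lfloor>y $ i\<rfloor> \<lfloor>x $ i\<rfloor>)\<bar> < 1/8"
    using i by linarith
  then have "(3/8::real)\<^sup>2 \<le> \<bar>(y - cell_center z) $ i\<bar>\<^sup>2"
    using half_integer_far_from_near_integer[of "y $ i" _ "\<lfloor>z $ i\<rfloor>"]
    by (intro power_mono) (auto simp: cell_center_def)
  also have "\<dots> \<le> (norm (y - cell_center z))\<^sup>2"
    by (intro power_mono component_le_norm_cart) simp
  finally show ?thesis
    by (simp add: power2_eq_square)
qed

text \<open>A point of another cell that is \<open>1/8\<close>-close to \<open>x\<close> lies near a face of the cells, hence far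
  from every cell centre, where the profile vanishes.\<close>
lemma periodic_bump_local:
  fixes x y :: "real^'n"
  assumes w: "0 < w" "w \<le> 1/16" and close: "dist y x < 1/8"
  shows "periodic_bump m w y = shell_step m w ((norm (y - cell_center x))\<^sup>2)"
    and "periodic_bump_grad m w y =
      shell_step_deriv m w ((norm (y - cell_center x))\<^sup>2) *\<^sub>R (2 *\<^sub>R (y - cell_center x))"
proof -
  have "cell_center y = cell_center x \<or>
      (1/8 \<le> (norm (y - cell_center y))\<^sup>2 \<and> 1/8 \<le> (norm (y - cell_center x))\<^sup>2)"
    using far_from_cell_centers[OF close] by (auto simp: cell_center_def vec_eq_iff)
  then show "periodic_bump m w y = shell_step m w ((norm (y - cell_center x))\<^sup>2)"
    and "periodic_bump_grad m w y =
      shell_step_deriv m w ((norm (y - cell_center x))\<^sup>2) *\<^sub>R (2 *\<^sub>R (y - cell_center x))"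
    using shell_step_vanishes[OF w] by (auto simp: periodic_bump_def periodic_bump_grad_def)
qed

lemma has_derivative_periodic_bump:
  fixes x :: "real^'n"
  assumes w: "0 < w" "w \<le> 1/16"
  shows "(periodic_bump m w has_derivative (\<lambda>h. periodic_bump_grad m w x \<bullet> h)) (at x)"
proof -
  define p where "p = cell_center x"
  define q where "q y = (y - p) \<bullet> (y - p)" for y
  have "(q has_derivative (\<lambda>h. 2 *\<^sub>R (x - p) \<bullet> h)) (at x)"
    unfolding q_def[abs_def] by (auto intro!: derivative_eq_intros simp: inner_commute)
  moreover have "(shell_step m w has_derivative (\<lambda>t. shell_step_deriv m w (q x) * t)) (at (q x))"
    using has_real_derivative_shell_step[OF w(1)] by (simp add: has_field_derivative_def mult_commute_abs)
  ultimately have "((\<lambda>y. shell_step m w (q y)) has_derivative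
      (\<lambda>h. shell_step_deriv m w (q x) * (2 *\<^sub>R (x - p) \<bullet> h))) (at x)"
    by (rule has_derivative_compose)
  moreover have "(\<lambda>h. shell_step_deriv m w (q x) * (2 *\<^sub>R (x - p) \<bullet> h)) =
      (\<lambda>h. periodic_bump_grad m w x \<bullet> h)"
    by (simp add: fun_eq_iff periodic_bump_grad_def q_def p_def power2_norm_eq_inner)
  ultimately have "((\<lambda>y. shell_step m w (q y)) has_derivative (\<lambda>h. periodic_bump_grad m w x \<bullet> h)) (at x)"
    by simp
  then show ?thesis
    by (rule has_derivative_transform_within[of _ _ _ _ "1/8"])
      (simp_all add: periodic_bump_local(1)[OF w] q_def p_def power2_norm_eq_inner)
qed

lemma continuous_on_periodic_bump_grad:
  assumes w: "0 < w" "w \<le> 1/16"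
  shows "continuous_on UNIV (periodic_bump_grad m w :: real^'n \<Rightarrow> real^'n)"
proof -
  have "isCont (periodic_bump_grad m w) x" for x :: "real^'n"
  proof -
    define p where "p = cell_center x"
    have "continuous_on UNIV (\<lambda>y. shell_step_deriv m w ((norm (y - p))\<^sup>2) *\<^sub>R (2 *\<^sub>R (y - p)))"
      by (intro continuous_intros continuous_on_compose2[OF continuous_on_shell_step_deriv]) auto
    then have "isCont (\<lambda>y. shell_step_deriv m w ((norm (y - p))\<^sup>2) *\<^sub>R (2 *\<^sub>R (y - p))) x"
      by (simp add: continuous_on_eq_continuous_at)
    then show ?thesis
      by (rule continuous_transform_within[of _ _ _ "1/8"])
        (simp_all add: p_def periodic_bump_local(2)[OF w])
  qed
  then show ?thesis
    by (simp add: continuous_at_imp_continuous_on)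
qed

lemma C1_fun_periodic_bump: "0 < w \<Longrightarrow> w \<le> 1/16 \<Longrightarrow> C1_fun (periodic_bump m w)"
  by (rule C1_funI[OF has_derivative_periodic_bump continuous_on_periodic_bump_grad])

lemma cell_center_cube: "x \<in> cbox 0 1 \<Longrightarrow> (\<And>i. x $ i < 1) \<Longrightarrow> cell_center x = cube_center"
  by (auto simp: cell_center_def cube_center_def vec_eq_iff mem_box_cart floor_eq_iff)

lemma cball_cube_center_subset_cube: "r \<le> 1/2 \<Longrightarrow> cball (cube_center :: real^'n) r \<subseteq> cbox 0 1"
proof
  fix x :: "real^'n"
  assume "r \<le> 1/2" "x \<in> cball cube_center r"
  then have bound: "\<bar>x $ i - 1/2\<bar> \<le> 1/2" for i
    using component_le_norm_cart[of "x - cube_center" i]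
    by (simp add: dist_norm norm_minus_commute cube_center_def)
  have "0 \<le> x $ i \<and> x $ i \<le> 1" for i
    using bound[of i] by linarith
  then show "x \<in> cbox 0 1"
    by (simp add: mem_box_cart)
qed

lemma periodic_bump_grad_sphere:
  assumes "\<xi> \<in> sphere (cube_center :: real^'n) (1/4)"
  shows "periodic_bump_grad m w \<xi> = (- 2 * m) *\<^sub>R (\<xi> - cube_center)"
proof -
  have bound: "\<bar>\<xi> $ i - 1/2\<bar> \<le> 1/4" for i
    using component_le_norm_cart[of "\<xi> - cube_center" i] assms
    by (simp add: dist_norm norm_minus_commute cube_center_def)
  have "\<xi> $ i < 1" for i
    using bound[of i] by linarith
  moreover have "\<xi> \<in> cbox 0 1"
    using assms cball_cube_center_subset_cube[of "1/4"] by auto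
  ultimately have "cell_center \<xi> = cube_center"
    using cell_center_cube by blast
  moreover have "norm (\<xi> - cube_center) = 1/4"
    using assms by (metis dist_norm mem_sphere norm_minus_commute)
  then have "(norm (\<xi> - cube_center))\<^sup>2 = 1/16"
    by (subst \<open>norm (\<xi> - cube_center) = 1/4\<close>) (simp add: power2_eq_square)
  ultimately show ?thesis
    unfolding periodic_bump_grad_def shell_step_deriv_def by (simp only:) simp
qed

lemma cell_center_eq_cube_center:
  fixes x :: "real^'n"
  assumes x: "x \<in> cbox 0 1" and near: "(norm (x - cell_center x))\<^sup>2 < 1/4"
  shows "cell_center x = cube_center"
proof (rule cell_center_cube[OF x])
  fix i
  show "x $ i < 1"
  proof (rule ccontr)
    assume "\<not> x $ i < 1"
    then have "x $ i = 1"
      using x by (simp add: mem_box_cart) (meson order.antisym not_less)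
    then have "(1/2::real)\<^sup>2 \<le> (norm (x - cell_center x))\<^sup>2"
      using component_le_norm_cart[of "x - cell_center x" i]
      by (intro power_mono) (auto simp: cell_center_def)
    then show False
      using near by (simp add: power2_eq_square)
  qed
qed

lemma shell_radius_le: "w \<le> 1/16 \<Longrightarrow> sqrt (1/16 + w) \<le> 1/2"
  by (rule real_le_lsqrt) (auto simp: power2_eq_square)

definition bump_shell :: "real \<Rightarrow> (real^'n) set" where
  "bump_shell w = cball cube_center (sqrt (1/16 + w)) - ball cube_center (sqrt (1/16 - w))"

lemma lmeasurable_bump_shell: "bump_shell w \<in> lmeasurable"
  unfolding bump_shell_def by (intro fmeasurable_Diff lmeasurable_cball) simp

lemma bump_shell_subset_cube: "w \<le> 1/16 \<Longrightarrow> bump_shell w \<subseteq> cbox 0 1"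
  using cball_cube_center_subset_cube[OF shell_radius_le] by (auto simp: bump_shell_def)

lemma periodic_bump_grad_support:
  fixes x :: "real^'n"
  assumes m: "0 \<le> m" and w: "0 < w" "w \<le> 1/16" and x: "x \<in> cbox 0 1"
    and nz: "periodic_bump_grad m w x \<noteq> 0"
  shows "x \<in> bump_shell w" and "norm (periodic_bump_grad m w x) \<le> m"
proof -
  define s where "s = (norm (x - cell_center x))\<^sup>2"
  define u where "u = (s - 1/16) / w"
  have "shell_step_deriv m w s \<noteq> 0"
    using nz by (simp add: periodic_bump_grad_def s_def)
  then have "\<bar>u\<bar> < 1"
    unfolding shell_step_deriv_def u_def[symmetric] by (auto simp: max_def split: if_splits)
  then have s: "1/16 - w < s" "s < 1/16 + w"
    using w by (auto simp: u_def abs_less_iff field_simps)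
  have c: "cell_center x = cube_center"
    using s w by (intro cell_center_eq_cube_center[OF x]) (simp add: s_def)
  then have norm: "sqrt (1/16 - w) < norm (x - cube_center)" "norm (x - cube_center) < sqrt (1/16 + w)"
    using s by (auto simp: s_def real_less_rsqrt real_less_lsqrt)
  then show "x \<in> bump_shell w"
    by (simp add: bump_shell_def dist_norm norm_minus_commute)
  have "2 * norm (x - cube_center) \<le> 1"
    using norm shell_radius_le[OF w(2)] by linarith
  moreover have "\<bar>shell_step_deriv m w s\<bar> \<le> m"
    using m unfolding shell_step_deriv_def u_def[symmetric] by (auto simp: abs_mult max_def mult_left_le)
  ultimately have "\<bar>shell_step_deriv m w s\<bar> * (2 * norm (x - cube_center)) \<le> m * 1"
    using m by (intro mult_mono) auto
  then show "norm (periodic_bump_grad m w x) \<le> m"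
    by (simp add: periodic_bump_grad_def s_def c)
qed

lemma normal_derivative_bump_perturbation:
  fixes b :: "real^'n \<Rightarrow> real"
  assumes b: "C1_fun b" and w: "0 < w" "w \<le> 1/16" and \<xi>: "\<xi> \<in> sphere cube_center (1/4)"
  shows "grad (\<lambda>x. b x + periodic_bump m w x) \<xi> \<bullet> outward_normal (ball cube_center (1/4)) \<xi>
    = 4 * (grad b \<xi> \<bullet> (\<xi> - cube_center)) - m / 2"
proof -
  define v where "v = \<xi> - cube_center"
  have "norm v = 1/4"
    using \<xi> by (metis dist_norm mem_sphere norm_minus_commute v_def)
  have "v \<bullet> v = (norm v)\<^sup>2"
    by (simp add: power2_norm_eq_inner)
  also have "\<dots> = 1/16"
    by (subst \<open>norm v = 1/4\<close>) (simp add: power2_eq_square)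
  finally have vv: "v \<bullet> v = 1/16" .
  have "((\<lambda>x. b x + periodic_bump m w x) has_derivative
      (\<lambda>h. (grad b \<xi> + periodic_bump_grad m w \<xi>) \<bullet> h)) (at \<xi>)"
    using has_derivative_add[OF C1_fun_has_derivative[OF b] has_derivative_periodic_bump[OF w]]
    by (simp add: inner_add_left)
  then have "grad (\<lambda>x. b x + periodic_bump m w x) \<xi> = grad b \<xi> + (- 2 * m) *\<^sub>R v"
    using periodic_bump_grad_sphere[OF \<xi>] by (simp add: grad_eqI v_def)
  moreover have "outward_normal (ball cube_center (1/4)) \<xi> = 4 *\<^sub>R v"
    using outward_normal_ball[of "1/4" \<xi>] \<xi> by (simp add: v_def)
  ultimately have "grad (\<lambda>x. b x + periodic_bump m w x) \<xi> \<bullet> outward_normal (ball cube_center (1/4)) \<xi>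
      = (grad b \<xi> + (- 2 * m) *\<^sub>R v) \<bullet> (4 *\<^sub>R v)"
    by (simp only:)
  also have "\<dots> = 4 * (grad b \<xi> \<bullet> v) - m / 2"
    by (simp add: inner_add_left inner_diff_left vv algebra_simps)
  finally show ?thesis
    by (simp add: v_def)
qed

lemma strict_stat_subsol_bump_perturbation:
  fixes b :: "real^'n \<Rightarrow> real"
  assumes b: "C1_fun b" "\<And>x. b x \<le> \<Lambda> - m * w"
    and M: "\<And>x. x \<in> sphere cube_center (1/4) \<Longrightarrow> norm (grad b x) \<le> M"
    and m: "4 * \<Lambda> * (real CARD('n) - 1) + M < m / 2" "0 \<le> m"
    and w: "0 < w" "w \<le> 1/16"
  shows "strict_stat_subsol (\<lambda>x. b x + periodic_bump m w x) (ball cube_center (1/4))"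
  unfolding strict_stat_subsol_def
proof
  fix \<xi> :: "real^'n"
  assume "\<xi> \<in> frontier (ball cube_center (1/4))"
  then have \<xi>: "\<xi> \<in> sphere cube_center (1/4)"
    by simp
  define D A where "D = real CARD('n) - 1" and "A = b \<xi> + periodic_bump m w \<xi>"
  have "norm (\<xi> - cube_center) = 1/4"
    using \<xi> by (metis dist_norm mem_sphere norm_minus_commute)
  have "\<bar>grad b \<xi> \<bullet> (\<xi> - cube_center)\<bar> \<le> norm (grad b \<xi>) * (1/4)"
    using Cauchy_Schwarz_ineq2[of "grad b \<xi>" "\<xi> - cube_center"]
    unfolding \<open>norm (\<xi> - cube_center) = 1/4\<close> .
  then have "4 * (grad b \<xi> \<bullet> (\<xi> - cube_center)) \<le> M"
    using M[OF \<xi>] by linarith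
  moreover have "A * D \<le> \<Lambda> * D"
  proof (rule mult_right_mono)
    show "A \<le> \<Lambda>"
      using b(2)[of \<xi>] periodic_bump_bounds[OF m(2) w(1), of \<xi>] unfolding A_def by linarith
  qed (simp add: D_def)
  moreover have "mean_curvature (ball cube_center (1/4)) \<xi> = 4 * D"
    using mean_curvature_ball[OF _ \<xi>] by (simp add: D_def)
  then have "- A * mean_curvature (ball cube_center (1/4)) \<xi>
      - grad (\<lambda>x. b x + periodic_bump m w x) \<xi> \<bullet> outward_normal (ball cube_center (1/4)) \<xi>
    = 4 * (\<Lambda> * D - A * D) + (M - 4 * (grad b \<xi> \<bullet> (\<xi> - cube_center))) + (m / 2 - 4 * \<Lambda> * D - M)"
    unfolding normal_derivative_bump_perturbation[OF b(1) w \<xi>] by (simp add: algebra_simps)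
  ultimately show "- A * mean_curvature (ball cube_center (1/4)) \<xi>
      - grad (\<lambda>x. b x + periodic_bump m w x) \<xi> \<bullet> outward_normal (ball cube_center (1/4)) \<xi> > 0"
    using m(1) unfolding D_def[symmetric] by argo
qed

lemma C1_torus_bump_perturbation:
  assumes b: "C1_fun b" "periodic b" "\<And>x. 1 \<le> b x \<and> b x \<le> \<Lambda> - m * w"
    and m: "0 \<le> m" and w: "0 < w" "w \<le> 1/16"
  shows "C1_torus \<Lambda> (\<lambda>x. b x + periodic_bump m w x)"
  unfolding C1_torus_def
proof (intro conjI allI)
  show "C1_fun (\<lambda>x. b x + periodic_bump m w x)"
    by (rule C1_fun_add[OF b(1) C1_fun_periodic_bump[OF w]])
  show "periodic (\<lambda>x. b x + periodic_bump m w x)"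
    using b(2) periodic_periodic_bump[of m w] unfolding periodic_def by simp
  fix x
  show "1 \<le> b x + periodic_bump m w x" "b x + periodic_bump m w x \<le> \<Lambda>"
    using b(3)[of x] periodic_bump_bounds[OF m w(1), of x] by auto
qed

section \<open>The Sobolev error\<close>

lemma quarter_powr_le:
  fixes p \<delta> :: real
  assumes "1 \<le> p" "0 \<le> \<delta>"
  shows "2 * (\<delta> / 4) powr p \<le> \<delta> powr p / 2"
proof -
  have "4 \<le> (4::real) powr p"
    using powr_mono[of 1 p 4] assms(1) by simp
  have "2 * (\<delta> / 4) powr p = 2 * \<delta> powr p / 4 powr p"
    using assms(2) by (simp add: powr_divide)
  also have "\<dots> \<le> 2 * \<delta> powr p / 4"
    using \<open>4 \<le> 4 powr p\<close> by (intro divide_left_mono) auto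
  finally show ?thesis
    by simp
qed

lemma W1p_norm_le:
  fixes f :: "real^'n \<Rightarrow> real" and S :: "(real^'n) set"
  assumes p: "1 \<le> p" and \<delta>: "0 < \<delta>" and S: "S \<in> lmeasurable" "S \<subseteq> cbox 0 1" and Q: "0 \<le> Q"
    and pointwise: "\<And>x. x \<in> cbox 0 1 \<Longrightarrow>
      \<bar>f x\<bar> powr p + norm (grad f x) powr p \<le> 2 * (\<delta> / 4) powr p + Q * indicator S x"
    and small: "Q * measure lebesgue S \<le> \<delta> powr p / 2"
  shows "W1p_norm p f \<le> \<delta>"
proof -
  define F where "F x = \<bar>f x\<bar> powr p + norm (grad f x) powr p" for x
  have "cbox 0 (1::real^'n) \<noteq> {}"
    using frac_vec_in_unit_cube by blast
  then have "measure lborel (cbox 0 (1::real^'n)) = 1"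
    by (simp add: content_cbox_cart)
  then have const: "((\<lambda>x. 2 * (\<delta> / 4) powr p) has_integral 2 * (\<delta> / 4) powr p) (cbox 0 (1::real^'n))"
    using has_integral_const[of "2 * (\<delta> / 4) powr p" "0::real^'n" 1] by simp
  have "(indicator S has_integral measure lebesgue S) (cbox 0 1)"
    using S integral_indicator[of S "cbox 0 1"] integrable_on_indicator[of S "cbox 0 1"]
    by (simp add: Int_absorb2 has_integral_integral)
  then have bound: "((\<lambda>x. 2 * (\<delta> / 4) powr p + Q * indicator S x) has_integral
      2 * (\<delta> / 4) powr p + Q * measure lebesgue S) (cbox 0 1)"
    by (rule has_integral_add[OF const has_integral_mult_right])
  have "integral (cbox 0 1) F \<le> \<delta> powr p"
  proof (cases "F integrable_on cbox 0 1")
    case True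
    then have "integral (cbox 0 1) F \<le> 2 * (\<delta> / 4) powr p + Q * measure lebesgue S"
      using has_integral_le[OF integrable_integral[OF True] bound] pointwise by (simp add: F_def)
    then show ?thesis
      using small quarter_powr_le[OF p, of \<delta>] \<delta> by linarith
  qed (simp add: not_integrable_integral)
  moreover have "0 \<le> integral (cbox 0 1) F"
    by (cases "F integrable_on cbox 0 1") (auto simp: F_def not_integrable_integral intro: integral_nonneg)
  ultimately have "W1p_norm p f \<le> (\<delta> powr p) powr (1 / p)"
    unfolding W1p_norm_def F_def[symmetric] using p by (intro powr_mono2) auto
  also have "\<dots> = \<delta>"
    using p \<delta> by (simp add: powr_powr)
  finally show ?thesis .
qed

lemma measure_shell_tendsto_0:
  fixes c :: "real^'n"
  assumes "0 < \<rho>"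
  shows "((\<lambda>w. measure lebesgue (cball c (sqrt (\<rho> + w)) - ball c (sqrt (\<rho> - w)))) \<longlongrightarrow> 0) (at_right 0)"
proof -
  define V where "V r = unit_ball_vol (real CARD('n)) * r ^ CARD('n)" for r
  have "measure lebesgue (cball c (sqrt (\<rho> + w)) - ball c (sqrt (\<rho> - w)))
      = V (sqrt (\<rho> + w)) - V (sqrt (\<rho> - w))" if "0 < w" "w < \<rho>" for w
  proof -
    have "sqrt (\<rho> - w) \<le> sqrt (\<rho> + w)"
      using that by simp
    then have "ball c (sqrt (\<rho> - w)) \<subseteq> cball c (sqrt (\<rho> + w))"
      by (rule order_trans[OF ball_subset_cball subset_cball])
    then show ?thesis
      using that content_cball[of "sqrt (\<rho> + w)" c] content_ball[of "sqrt (\<rho> - w)" c]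
      by (simp add: measurable_measure_Diff measure_completion V_def)
  qed
  then have "\<forall>\<^sub>F w in at_right 0. V (sqrt (\<rho> + w)) - V (sqrt (\<rho> - w)) =
      measure lebesgue (cball c (sqrt (\<rho> + w)) - ball c (sqrt (\<rho> - w)))"
    using assms by (auto simp: eventually_at_right_field intro!: exI[of _ \<rho>])
  moreover have "((\<lambda>w. V (sqrt (\<rho> + w)) - V (sqrt (\<rho> - w))) \<longlongrightarrow> V (sqrt (\<rho> + 0)) - V (sqrt (\<rho> - 0))) (at_right 0)"
    unfolding V_def by (intro tendsto_intros)
  ultimately show ?thesis
    by (simp add: Lim_transform_eventually)
qed

lemma exists_bump_width:
  assumes "0 < \<eta>" "0 < m" "0 < \<epsilon>"
  obtains w where "0 < w" "w \<le> 1/16" "m * w \<le> \<eta>" "Q * measure lebesgue (bump_shell w :: (real^'n) set) < \<epsilon>"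
proof -
  have "((\<lambda>w. Q * measure lebesgue (bump_shell w :: (real^'n) set)) \<longlongrightarrow> Q * 0) (at_right 0)"
    unfolding bump_shell_def by (intro tendsto_mult_left measure_shell_tendsto_0) simp
  then have "\<forall>\<^sub>F w in at_right 0. Q * measure lebesgue (bump_shell w :: (real^'n) set) < \<epsilon>"
    using assms(3) by (simp add: order_tendstoD(2))
  moreover have "\<forall>\<^sub>F w in at_right 0. 0 < w \<and> w \<le> 1/16 \<and> m * w \<le> \<eta>"
    unfolding eventually_at_right_field using assms(1,2)
    by (intro exI[of _ "min (1/16) (\<eta> / m)"]) (auto simp: field_simps)
  ultimately show ?thesis
    using that eventually_happens'[OF trivial_limit_at_right_real] eventually_conj by blast
qed

lemma W1p_integrand_minus_periodic_bump_le:
  fixes g :: "real^'n \<Rightarrow> real"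
  assumes p: "1 \<le> p" and g: "C1_fun g" "\<bar>g x\<bar> + m * w \<le> \<delta> / 4" "norm (grad g x) \<le> \<delta> / 4"
    and m: "0 \<le> m" and w: "0 < w" "w \<le> 1/16" and x: "x \<in> cbox 0 1"
  shows "\<bar>g x - periodic_bump m w x\<bar> powr p + norm (grad (\<lambda>x. g x - periodic_bump m w x) x) powr p
    \<le> 2 * (\<delta> / 4) powr p + (\<delta> / 4 + m) powr p * indicator (bump_shell w) x"
proof -
  define f where "f x = g x - periodic_bump m w x" for x
  have "grad f x = grad g x - periodic_bump_grad m w x"
    unfolding f_def[abs_def]
    by (rule grad_eqI) (auto intro!: derivative_eq_intros C1_fun_has_derivative[OF g(1)]
        has_derivative_periodic_bump[OF w] simp: inner_diff_left)
  then have grad_f: "norm (grad f x) \<le> \<delta> / 4 + norm (periodic_bump_grad m w x)"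
    using norm_triangle_ineq4[of "grad g x" "periodic_bump_grad m w x"] g(3) by simp
  have "\<bar>periodic_bump m w x\<bar> \<le> m * w"
    using periodic_bump_bounds[OF m w(1), of x] by simp
  then have "\<bar>f x\<bar> \<le> \<delta> / 4"
    using g(2) abs_triangle_ineq4[of "g x" "periodic_bump m w x"] unfolding f_def by argo
  then have f: "\<bar>f x\<bar> powr p \<le> (\<delta> / 4) powr p"
    using p by (intro powr_mono2) auto
  show ?thesis
    unfolding f_def[symmetric]
  proof (cases "periodic_bump_grad m w x = 0")
    case True
    then have "norm (grad f x) powr p \<le> (\<delta> / 4) powr p"
      using grad_f p by (intro powr_mono2) auto
    moreover have "0 \<le> (\<delta> / 4 + m) powr p * indicator (bump_shell w) x"
      by simp
    ultimately show "\<bar>f x\<bar> powr p + norm (grad f x) powr p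
        \<le> 2 * (\<delta> / 4) powr p + (\<delta> / 4 + m) powr p * indicator (bump_shell w) x"
      using f by linarith
  next
    case False
    note support = periodic_bump_grad_support[OF m w x False]
    have "norm (grad f x) powr p \<le> (\<delta> / 4 + m) powr p"
      using grad_f support(2) p by (intro powr_mono2) auto
    moreover have "(\<delta> / 4 + m) powr p * indicator (bump_shell w) x = (\<delta> / 4 + m) powr p"
      using support(1) by simp
    ultimately show "\<bar>f x\<bar> powr p + norm (grad f x) powr p
        \<le> 2 * (\<delta> / 4) powr p + (\<delta> / 4 + m) powr p * indicator (bump_shell w) x"
      using f powr_ge_zero[of "\<delta> / 4" p] by linarith
  qed
qed

lemma W1p_norm_minus_periodic_bump_le:
  fixes g :: "real^'n \<Rightarrow> real"
  assumes p: "1 \<le> p" and \<delta>: "0 < \<delta>" and g: "C1_fun g"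
    and g_small: "\<And>x. \<bar>g x\<bar> + m * w \<le> \<delta> / 4" "\<And>x. x \<in> cbox 0 1 \<Longrightarrow> norm (grad g x) \<le> \<delta> / 4"
    and m: "0 \<le> m" and w: "0 < w" "w \<le> 1/16"
    and shell: "(\<delta> / 4 + m) powr p * measure lebesgue (bump_shell w :: (real^'n) set) \<le> \<delta> powr p / 2"
  shows "W1p_norm p (\<lambda>x. g x - periodic_bump m w x) \<le> \<delta>"
  using W1p_integrand_minus_periodic_bump_le[OF p g(1) g_small m w]
  by (intro W1p_norm_le[OF p \<delta> lmeasurable_bump_shell bump_shell_subset_cube[OF w(2)] _ _ shell]) simp_all

lemma exists_shrink_factor:
  fixes L M \<delta> :: real
  assumes "0 < L" "0 \<le> M" "0 < \<delta>"
  obtains \<theta> where "0 < \<theta>" "\<theta> \<le> 1" "\<theta> * L \<le> \<delta> / 8" "\<theta> * M \<le> \<delta> / 8"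
proof -
  define \<theta> where "\<theta> = min 1 (\<delta> / (8 * (L + M + 1)))"
  have \<theta>: "0 < \<theta>" "\<theta> \<le> 1"
    using assms by (simp_all add: \<theta>_def)
  have "\<theta> * (L + M + 1) \<le> \<delta> / (8 * (L + M + 1)) * (L + M + 1)"
    using assms by (intro mult_right_mono) (auto simp: \<theta>_def)
  also have "\<dots> = \<delta> / 8"
    using assms by (simp add: field_simps)
  finally have "\<theta> * (L + M + 1) \<le> \<delta> / 8" .
  moreover have "\<theta> * L \<le> \<theta> * (L + M + 1)" "\<theta> * M \<le> \<theta> * (L + M + 1)"
    using \<theta>(1) assms by (simp_all add: mult_left_mono)
  ultimately have "\<theta> * L \<le> \<delta> / 8" "\<theta> * M \<le> \<delta> / 8"
    by linarith+
  then show ?thesis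
    using that \<theta> by blast
qed

lemma abs_sub_midpoint_le: "1 \<le> t \<Longrightarrow> t \<le> \<Lambda> \<Longrightarrow> \<bar>t - (1 + \<Lambda>) / 2\<bar> \<le> (\<Lambda> - 1) / 2"
  for t \<Lambda> :: real
  by argo

lemma W1p_norm_shrink_bump_error_le:
  fixes a :: "real^'n \<Rightarrow> real"
  assumes p: "1 \<le> p" and \<delta>: "0 < \<delta>" and a: "C1_fun a" "\<And>x. \<bar>a x - (1 + \<Lambda>) / 2\<bar> \<le> L"
    and M: "\<And>x. x \<in> cbox 0 1 \<Longrightarrow> norm (grad a x) \<le> M"
    and \<theta>: "0 < \<theta>" "\<theta> \<le> 1" "\<theta> * L \<le> \<delta> / 8" "\<theta> * M \<le> \<delta> / 8"
    and m: "0 \<le> m" and w: "0 < w" "w \<le> 1/16" "m * w \<le> \<theta> * L"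
    and shell: "(\<delta> / 4 + m) powr p * measure lebesgue (bump_shell w :: (real^'n) set) \<le> \<delta> powr p / 2"
  shows "W1p_norm p (\<lambda>x. a x - (midpoint_shrink \<Lambda> \<theta> a x + periodic_bump m w x)) \<le> \<delta>"
proof -
  have "W1p_norm p (\<lambda>x. (a x - midpoint_shrink \<Lambda> \<theta> a x) - periodic_bump m w x) \<le> \<delta>"
  proof (rule W1p_norm_minus_periodic_bump_le[OF p \<delta> C1_fun_minus_midpoint_shrink[OF a(1)] _ _ m w(1,2) shell])
    show "\<bar>a x - midpoint_shrink \<Lambda> \<theta> a x\<bar> + m * w \<le> \<delta> / 4" for x
      using midpoint_shrink_dist(2)[where f = a and x = x, OF a(2) less_imp_le[OF \<theta>(1)] \<theta>(2)]
        w(3) \<theta>(3) by argo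
    show "norm (grad (\<lambda>x. a x - midpoint_shrink \<Lambda> \<theta> a x) x) \<le> \<delta> / 4" if "x \<in> cbox 0 1" for x
    proof -
      have "norm (grad (\<lambda>x. a x - midpoint_shrink \<Lambda> \<theta> a x) x) = \<theta> * norm (grad a x)"
        using \<theta>(1) by (simp add: grad_minus_midpoint_shrink[OF a(1)])
      also have "\<dots> \<le> \<theta> * M"
        using M[OF that] \<theta>(1) by (intro mult_left_mono) auto
      finally show ?thesis
        using \<theta>(4) \<delta> by linarith
    qed
  qed
  then show ?thesis
    by (simp add: algebra_simps)
qed

lemma C1_torus_strict_subsolution_approximation:
  fixes a :: "real^'n \<Rightarrow> real"
  assumes \<Lambda>: "1 < \<Lambda>" and a: "C1_torus \<Lambda> a" and \<delta>: "0 < \<delta>" and p: "1 \<le> p"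
  obtains a\<^sub>\<delta> where "C1_torus \<Lambda> a\<^sub>\<delta>" "\<And>x. \<bar>a x - a\<^sub>\<delta> x\<bar> \<le> \<delta>"
    "W1p_norm p (\<lambda>x. a x - a\<^sub>\<delta> x) \<le> \<delta>" "strict_stat_subsol a\<^sub>\<delta> (ball cube_center (1/4))"
proof -
  define L where "L = (\<Lambda> - 1) / 2"
  have a1: "C1_fun a" "periodic a"
    using a by (simp_all add: C1_torus_def)
  have a_range: "\<bar>a x - (1 + \<Lambda>) / 2\<bar> \<le> L" for x
    unfolding L_def using a by (intro abs_sub_midpoint_le) (simp_all add: C1_torus_def)
  obtain M where M: "0 \<le> M" "\<And>x. x \<in> cbox 0 1 \<Longrightarrow> norm (grad a x) \<le> M"
    using continuous_on_compact_bound[OF compact_cbox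
        continuous_on_subset[OF continuous_on_grad[OF a1(1)] subset_UNIV]] by blast
  obtain \<theta> where \<theta>: "0 < \<theta>" "\<theta> \<le> 1" "\<theta> * L \<le> \<delta> / 8" "\<theta> * M \<le> \<delta> / 8"
    using exists_shrink_factor[of L M \<delta>] \<Lambda> M(1) \<delta> by (auto simp: L_def)
  define b where "b = midpoint_shrink \<Lambda> \<theta> a"
  note shrink = midpoint_shrink_dist[where f = a, OF a_range less_imp_le[OF \<theta>(1)] \<theta>(2), folded b_def]
  define m where "m = 2 * (4 * \<Lambda> * (real CARD('n) - 1) + M + 1)"
  have "0 \<le> \<Lambda> * (real CARD('n) - 1)"
    using \<Lambda> by simp
  then have m: "0 < m" "4 * \<Lambda> * (real CARD('n) - 1) + M < m / 2"
    using M(1) by (simp_all add: m_def)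
  obtain w where w: "0 < w" "w \<le> 1/16" "m * w \<le> \<theta> * L"
    and shell: "(\<delta> / 4 + m) powr p * measure lebesgue (bump_shell w :: (real^'n) set) < \<delta> powr p / 2"
    using exists_bump_width[of "\<theta> * L" m "\<delta> powr p / 2"] \<theta>(1) \<Lambda> m(1) \<delta> by (auto simp: L_def)
  have "1 \<le> b x \<and> b x \<le> \<Lambda> - m * w" for x
    using shrink(1)[of x] w(3) mult_pos_pos[OF m(1) w(1)] left_diff_distrib[of 1 \<theta> L] L_def by argo
  then have b: "C1_fun b" "periodic b" "\<And>x. 1 \<le> b x \<and> b x \<le> \<Lambda> - m * w"
    using a1 by (simp_all add: b_def C1_fun_midpoint_shrink periodic_midpoint_shrink)
  have "norm (grad b x) \<le> M" if "x \<in> sphere cube_center (1/4)" for x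
  proof -
    have "x \<in> cbox 0 1"
      using that cball_cube_center_subset_cube[of "1/4"] by auto
    then show ?thesis
      using M(2) norm_grad_midpoint_shrink_le[OF a1(1) less_imp_le[OF \<theta>(1)] \<theta>(2), of \<Lambda> x]
      unfolding b_def by (meson order_trans)
  qed
  show ?thesis
  proof (rule that)
    show "C1_torus \<Lambda> (\<lambda>x. b x + periodic_bump m w x)"
      using C1_torus_bump_perturbation[OF b less_imp_le[OF m(1)] w(1,2)] .
    show "strict_stat_subsol (\<lambda>x. b x + periodic_bump m w x) (ball cube_center (1/4))"
      using strict_stat_subsol_bump_perturbation[OF b(1) _ \<open>\<And>x. _ \<Longrightarrow> norm (grad b x) \<le> M\<close> m(2)
          less_imp_le[OF m(1)] w(1,2)] b(3) by blast
    show "\<bar>a x - (b x + periodic_bump m w x)\<bar> \<le> \<delta>" for x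
      using shrink(2)[of x] periodic_bump_bounds[OF less_imp_le[OF m(1)] w(1), of x] w(3) \<theta>(3) \<delta>
      by argo
    show "W1p_norm p (\<lambda>x. a x - (b x + periodic_bump m w x)) \<le> \<delta>"
      unfolding b_def
      by (rule W1p_norm_shrink_bump_error_le[OF p \<delta> a1(1) a_range M(2) \<theta> less_imp_le[OF m(1)] w
            less_imp_le[OF shell]])
  qed
qed

lemma C0_torus_strict_subsolution_approximation:
  fixes a :: "real^'n \<Rightarrow> real"
  assumes \<Lambda>: "1 < \<Lambda>" and a: "C0_torus \<Lambda> a" and \<delta>: "0 < \<delta>"
  obtains a\<^sub>\<delta> where "C1_torus \<Lambda> a\<^sub>\<delta>" "\<And>x. \<bar>a x - a\<^sub>\<delta> x\<bar> \<le> \<delta>"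
    "strict_stat_subsol a\<^sub>\<delta> (ball cube_center (1/4))"
proof -
  obtain b where b: "C1_torus \<Lambda> b" "\<And>x. \<bar>a x - b x\<bar> \<le> \<delta> / 2"
    using C0_torus_C1_torus_approximation[of \<Lambda> a "\<delta> / 2"] \<Lambda> a \<delta> by auto
  obtain a\<^sub>\<delta> where a\<^sub>\<delta>: "C1_torus \<Lambda> a\<^sub>\<delta>" "\<And>x. \<bar>b x - a\<^sub>\<delta> x\<bar> \<le> \<delta> / 2"
    "strict_stat_subsol a\<^sub>\<delta> (ball cube_center (1/4))"
    using C1_torus_strict_subsolution_approximation[OF \<Lambda> b(1), of "\<delta> / 2" 1] \<delta> by auto
  have "\<bar>a x - a\<^sub>\<delta> x\<bar> \<le> \<delta>" for x
    using b(2)[of x] a\<^sub>\<delta>(2)[of x] by argo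
  then show ?thesis
    by (rule that[OF a\<^sub>\<delta>(1) _ a\<^sub>\<delta>(3)])
qed

lemma sup_dist_le: "(\<And>x. \<bar>f x - g x\<bar> \<le> \<delta>) \<Longrightarrow> sup_dist f g \<le> \<delta>"
  unfolding sup_dist_def by (rule cSUP_least) auto

theorem lemma4p6:
  fixes \<Lambda> :: real
  assumes "CARD('n::finite) \<ge> 2" and "\<Lambda> > 1"
  shows "(\<forall>(a :: real^'n \<Rightarrow> real) \<delta>. C0_torus \<Lambda> a \<and> \<delta> > 0 \<longrightarrow>
            (\<exists>a\<^sub>\<delta> (\<Omega> :: (real^'n) set). C1_torus \<Lambda> a\<^sub>\<delta> \<and> sup_dist a a\<^sub>\<delta> \<le> \<delta> \<and>
               \<Omega> \<noteq> {} \<and> bounded \<Omega> \<and> open \<Omega> \<and> C2_boundary \<Omega> \<and> strict_stat_subsol a\<^sub>\<delta> \<Omega>))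
       \<and> (\<forall>(a :: real^'n \<Rightarrow> real) \<delta> p. C2_torus \<Lambda> a \<and> \<delta> > 0 \<and> p \<ge> 1 \<longrightarrow>
            (\<exists>a\<^sub>\<delta> (\<Omega> :: (real^'n) set). C1_torus \<Lambda> a\<^sub>\<delta> \<and> sup_dist a a\<^sub>\<delta> \<le> \<delta> \<and>
               W1p_norm p (\<lambda>x. a x - a\<^sub>\<delta> x) \<le> \<delta> \<and>
               \<Omega> \<noteq> {} \<and> bounded \<Omega> \<and> open \<Omega> \<and> C2_boundary \<Omega> \<and> strict_stat_subsol a\<^sub>\<delta> \<Omega>))"
proof -
  let ?\<Omega> = "ball (cube_center :: real^'n) (1/4)"
  have "\<exists>a\<^sub>\<delta>. C1_torus \<Lambda> a\<^sub>\<delta> \<and> sup_dist a a\<^sub>\<delta> \<le> \<delta> \<and> strict_stat_subsol a\<^sub>\<delta> ?\<Omega>"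
    if "C0_torus \<Lambda> a" "\<delta> > 0" for a :: "real^'n \<Rightarrow> real" and \<delta>
    using C0_torus_strict_subsolution_approximation[OF assms(2) that] sup_dist_le by metis
  moreover have "\<exists>a\<^sub>\<delta>. C1_torus \<Lambda> a\<^sub>\<delta> \<and> sup_dist a a\<^sub>\<delta> \<le> \<delta> \<and> W1p_norm p (\<lambda>x. a x - a\<^sub>\<delta> x) \<le> \<delta> \<and>
      strict_stat_subsol a\<^sub>\<delta> ?\<Omega>"
    if "C2_torus \<Lambda> a" "\<delta> > 0" "p \<ge> 1" for a :: "real^'n \<Rightarrow> real" and \<delta> p
    using C1_torus_strict_subsolution_approximation[OF assms(2) C2_torus_imp_C1_torus[OF that(1)] that(2,3)]
      sup_dist_le by metis
  moreover have "?\<Omega> \<noteq> {}" "bounded ?\<Omega>" "open ?\<Omega>" "C2_boundary ?\<Omega>"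
    by (simp_all add: C2_boundary_ball)
  ultimately show ?thesis
    by blast
qed

end
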